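(* Let $A$ be a ring with Jacobson radical $J$. Then $A$ is left arithmetical and semilocal if and only if $A/J$ is finite and $J$ is finitely generated as a left $A$-module.
   Context: A ring $A$ is called left arithmetical if: (a) every simple left $A$-module has finitely many elements; (b) every simple left $A$-module is finitely presented; (c) for every positive integer $n$, there are only finitely many isomorphism classes of simple left $A$-modules with exactly $n$ elements. A ring $A$ with Jacobson radical $J$ is semilocal if $A/J$ is Artinian (semisimple). *)

theory Defs
  imports "HOL-Algebra.QuotRing" "HOL-Algebra.Module"
begin

definition left_module :: "('a, 'm) ring_scheme \<Rightarrow> ('a, 'b, 'n) module_scheme \<Rightarrow> bool" where
  "left_module R M \<longleftrightarrow> ring R \<and> abelian_group M \<and>
     (\<forall>a \<in> carrier R. \<forall>x \<in> carrier M. a \<odot>\<^bsub>M\<^esub> x \<in> carrier M) \<and>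
     (\<forall>a \<in> carrier R. \<forall>b \<in> carrier R. \<forall>x \<in> carrier M.
        (a \<oplus>\<^bsub>R\<^esub> b) \<odot>\<^bsub>M\<^esub> x = a \<odot>\<^bsub>M\<^esub> x \<oplus>\<^bsub>M\<^esub> b \<odot>\<^bsub>M\<^esub> x) \<and>
     (\<forall>a \<in> carrier R. \<forall>x \<in> carrier M. \<forall>y \<in> carrier M.
        a \<odot>\<^bsub>M\<^esub> (x \<oplus>\<^bsub>M\<^esub> y) = a \<odot>\<^bsub>M\<^esub> x \<oplus>\<^bsub>M\<^esub> a \<odot>\<^bsub>M\<^esub> y) \<and>
     (\<forall>a \<in> carrier R. \<forall>b \<in> carrier R. \<forall>x \<in> carrier M.
        (a \<otimes>\<^bsub>R\<^esub> b) \<odot>\<^bsub>M\<^esub> x = a \<odot>\<^bsub>M\<^esub> (b \<odot>\<^bsub>M\<^esub> x)) \<and>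
     (\<forall>x \<in> carrier M. \<one>\<^bsub>R\<^esub> \<odot>\<^bsub>M\<^esub> x = x)"

definition submodule :: "('a, 'm) ring_scheme \<Rightarrow> ('a, 'b, 'n) module_scheme \<Rightarrow> 'b set \<Rightarrow> bool" where
  "submodule R M N \<longleftrightarrow> N \<subseteq> carrier M \<and> additive_subgroup N M \<and>
     (\<forall>a \<in> carrier R. \<forall>x \<in> N. a \<odot>\<^bsub>M\<^esub> x \<in> N)"

definition mod_span :: "('a, 'm) ring_scheme \<Rightarrow> ('a, 'b, 'n) module_scheme \<Rightarrow> 'b set \<Rightarrow> 'b set" where
  "mod_span R M S = carrier M \<inter> \<Inter> {N. submodule R M N \<and> S \<subseteq> N}"

definition fin_gen_submodule :: "('a, 'm) ring_scheme \<Rightarrow> ('a, 'b, 'n) module_scheme \<Rightarrow> 'b set \<Rightarrow> bool" where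
  "fin_gen_submodule R M N \<longleftrightarrow> (\<exists>S. finite S \<and> S \<subseteq> N \<and> mod_span R M S = N)"

definition mod_hom :: "('a, 'm) ring_scheme \<Rightarrow> ('a, 'b, 'n) module_scheme \<Rightarrow> ('a, 'c, 'k) module_scheme
    \<Rightarrow> ('b \<Rightarrow> 'c) set" where
  "mod_hom R M N = {f. f \<in> carrier M \<rightarrow> carrier N \<and>
     (\<forall>x \<in> carrier M. \<forall>y \<in> carrier M. f (x \<oplus>\<^bsub>M\<^esub> y) = f x \<oplus>\<^bsub>N\<^esub> f y) \<and>
     (\<forall>a \<in> carrier R. \<forall>x \<in> carrier M. f (a \<odot>\<^bsub>M\<^esub> x) = a \<odot>\<^bsub>N\<^esub> f x)}"

definition mod_kernel :: "('a, 'b, 'n) module_scheme \<Rightarrow> ('a, 'c, 'k) module_scheme \<Rightarrow> ('b \<Rightarrow> 'c) \<Rightarrow> 'b set" where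
  "mod_kernel M N f = {x \<in> carrier M. f x = \<zero>\<^bsub>N\<^esub>}"

definition mod_iso :: "('a, 'm) ring_scheme \<Rightarrow> ('a, 'b, 'n) module_scheme \<Rightarrow> ('a, 'c, 'k) module_scheme \<Rightarrow> bool" where
  "mod_iso R M N \<longleftrightarrow> (\<exists>f \<in> mod_hom R M N. bij_betw f (carrier M) (carrier N))"

text \<open>Only the additive structure and the scalar multiplication matter; the ring
  multiplication/one fields of the record are irrelevant dummies.\<close>
definition free_module :: "('a, 'm) ring_scheme \<Rightarrow> nat \<Rightarrow> ('a, nat \<Rightarrow> 'a) module" where
  "free_module R n =
    \<lparr>carrier = {v. (\<forall>i<n. v i \<in> carrier R) \<and> (\<forall>i\<ge>n. v i = \<zero>\<^bsub>R\<^esub>)},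
     mult = (\<lambda>v w i. \<zero>\<^bsub>R\<^esub>), one = (\<lambda>i. \<zero>\<^bsub>R\<^esub>),
     zero = (\<lambda>i. \<zero>\<^bsub>R\<^esub>),
     add = (\<lambda>v w i. v i \<oplus>\<^bsub>R\<^esub> w i),
     smult = (\<lambda>a v i. a \<otimes>\<^bsub>R\<^esub> v i)\<rparr>"

definition finitely_presented :: "('a, 'm) ring_scheme \<Rightarrow> ('a, 'b, 'n) module_scheme \<Rightarrow> bool" where
  "finitely_presented R M \<longleftrightarrow>
     (\<exists>n f. f \<in> mod_hom R (free_module R n) M \<and>
            f ` carrier (free_module R n) = carrier M \<and>
            fin_gen_submodule R (free_module R n) (mod_kernel (free_module R n) M f))"

definition simple_module :: "('a, 'm) ring_scheme \<Rightarrow> ('a, 'b, 'n) module_scheme \<Rightarrow> bool" where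
  "simple_module R M \<longleftrightarrow> left_module R M \<and> carrier M \<noteq> {\<zero>\<^bsub>M\<^esub>} \<and>
     (\<forall>N. submodule R M N \<longrightarrow> N = {\<zero>\<^bsub>M\<^esub>} \<or> N = carrier M)"

definition regular_module :: "('a, 'm) ring_scheme \<Rightarrow> ('a, 'a) module" where
  "regular_module R = \<lparr>carrier = carrier R, mult = mult R, one = one R, zero = zero R,
     add = add R, smult = mult R\<rparr>"

definition maximal_left_ideal :: "('a, 'm) ring_scheme \<Rightarrow> 'a set \<Rightarrow> bool" where
  "maximal_left_ideal R I \<longleftrightarrow> submodule R (regular_module R) I \<and> I \<noteq> carrier R \<and>
     (\<forall>K. submodule R (regular_module R) K \<and> I \<subseteq> K \<longrightarrow> K = I \<or> K = carrier R)"

definition jacobson_radical :: "('a, 'm) ring_scheme \<Rightarrow> 'a set" where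
  "jacobson_radical R = carrier R \<inter> \<Inter> {I. maximal_left_ideal R I}"

definition left_artinian :: "('a, 'm) ring_scheme \<Rightarrow> bool" where
  "left_artinian R \<longleftrightarrow>
     (\<forall>f :: nat \<Rightarrow> 'a set. (\<forall>n. submodule R (regular_module R) (f n)) \<and> (\<forall>n. f (Suc n) \<subseteq> f n)
        \<longrightarrow> (\<exists>N. \<forall>n\<ge>N. f n = f N))"

definition semilocal :: "('a, 'm) ring_scheme \<Rightarrow> bool" where
  "semilocal R \<longleftrightarrow> left_artinian (R Quot jacobson_radical R)"

text \<open>Every simple left module is isomorphic to \<open>R/m\<close> for a maximal
  left ideal \<open>m\<close>, whose carrier consists of subsets of the carrier of R; hence
  quantifying over modules whose elements have type \<open>'a set\<close> covers all simple
  modules up to isomorphism, and all three conditions are isomorphism invariant.\<close>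
definition left_arithmetical :: "('a, 'm) ring_scheme \<Rightarrow> bool" where
  "left_arithmetical R \<longleftrightarrow>
     (\<forall>M :: ('a, 'a set) module. simple_module R M \<longrightarrow> finite (carrier M)) \<and>
     (\<forall>M :: ('a, 'a set) module. simple_module R M \<longrightarrow> finitely_presented R M) \<and>
     (\<forall>n::nat. n > 0 \<longrightarrow>
        (\<exists>F :: ('a, 'a set) module set. finite F \<and>
           (\<forall>M :: ('a, 'a set) module. simple_module R M \<and> finite (carrier M) \<and> card (carrier M) = n
               \<longrightarrow> (\<exists>N \<in> F. mod_iso R M N))))"

end

(* If A/J is finite, every simple module A/m is a quotient of A/J and hence finite, there are
   only finitely many maximal left ideals m (each is a union of cosets of J), and each m is
   generated by generators of J together with one representative of every J-coset inside m;
   so if moreover J is finitely generated, each A/m is finitely presented.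
   Conversely, finite presentation of A/m makes m finitely generated, and finiteness of A/m
   makes m of finite index. If I is a finitely generated left ideal of finite index and m is
   maximal with I not contained in m, then I + m = A, which makes I \<inter> m again finitely
   generated and of finite index. Since A/J is Artinian, some such I containing J is minimal;
   it then lies in every maximal left ideal, so it equals J. *)

theory Submission
  imports Defs
begin

abbreviation left_ideal :: "('a, 'm) ring_scheme \<Rightarrow> 'a set \<Rightarrow> bool" where
  "left_ideal R I \<equiv> submodule R (regular_module R) I"

abbreviation fin_gen_left_ideal :: "('a, 'm) ring_scheme \<Rightarrow> 'a set \<Rightarrow> bool" where
  "fin_gen_left_ideal R I \<equiv> fin_gen_submodule R (regular_module R) I"

abbreviation left_ideal_span :: "('a, 'm) ring_scheme \<Rightarrow> 'a set \<Rightarrow> 'a set" where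
  "left_ideal_span R S \<equiv> mod_span R (regular_module R) S"

section \<open>Left modules\<close>

locale lmodule = ring R for R :: "('a, 'm) ring_scheme" (structure) +
  fixes M :: "('a, 'b, 'n) module_scheme"
  assumes abelian_group_M: "abelian_group M"
    and smult_closed: "\<lbrakk>a \<in> carrier R; x \<in> carrier M\<rbrakk> \<Longrightarrow> a \<odot>\<^bsub>M\<^esub> x \<in> carrier M"
    and smult_l_distr: "\<lbrakk>a \<in> carrier R; b \<in> carrier R; x \<in> carrier M\<rbrakk> \<Longrightarrow>
      (a \<oplus> b) \<odot>\<^bsub>M\<^esub> x = a \<odot>\<^bsub>M\<^esub> x \<oplus>\<^bsub>M\<^esub> b \<odot>\<^bsub>M\<^esub> x"
    and smult_r_distr: "\<lbrakk>a \<in> carrier R; x \<in> carrier M; y \<in> carrier M\<rbrakk> \<Longrightarrow>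
      a \<odot>\<^bsub>M\<^esub> (x \<oplus>\<^bsub>M\<^esub> y) = a \<odot>\<^bsub>M\<^esub> x \<oplus>\<^bsub>M\<^esub> a \<odot>\<^bsub>M\<^esub> y"
    and smult_assoc1: "\<lbrakk>a \<in> carrier R; b \<in> carrier R; x \<in> carrier M\<rbrakk> \<Longrightarrow>
      (a \<otimes> b) \<odot>\<^bsub>M\<^esub> x = a \<odot>\<^bsub>M\<^esub> (b \<odot>\<^bsub>M\<^esub> x)"
    and smult_one: "x \<in> carrier M \<Longrightarrow> \<one> \<odot>\<^bsub>M\<^esub> x = x"

lemma left_module_iff_lmodule: "left_module R M \<longleftrightarrow> lmodule R M"
  unfolding left_module_def lmodule_def lmodule_axioms_def by auto

sublocale lmodule \<subseteq> M: abelian_group M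
  by (rule abelian_group_M)

context lmodule
begin

lemma smult_l_null: "x \<in> carrier M \<Longrightarrow> \<zero> \<odot>\<^bsub>M\<^esub> x = \<zero>\<^bsub>M\<^esub>"
  using smult_l_distr[of \<zero> \<zero> x] smult_closed[of \<zero> x] M.add.l_cancel_one[of "\<zero> \<odot>\<^bsub>M\<^esub> x"] by simp

lemma smult_r_null: "a \<in> carrier R \<Longrightarrow> a \<odot>\<^bsub>M\<^esub> \<zero>\<^bsub>M\<^esub> = \<zero>\<^bsub>M\<^esub>"
  using smult_r_distr[of a "\<zero>\<^bsub>M\<^esub>" "\<zero>\<^bsub>M\<^esub>"] smult_closed[of a "\<zero>\<^bsub>M\<^esub>"]
    M.add.l_cancel_one[of "a \<odot>\<^bsub>M\<^esub> \<zero>\<^bsub>M\<^esub>"] by simp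

lemma smult_l_minus:
  assumes "a \<in> carrier R" and "x \<in> carrier M"
  shows "(\<ominus> a) \<odot>\<^bsub>M\<^esub> x = \<ominus>\<^bsub>M\<^esub> (a \<odot>\<^bsub>M\<^esub> x)"
proof (rule M.minus_equality[symmetric])
  have "(\<ominus> a) \<odot>\<^bsub>M\<^esub> x \<oplus>\<^bsub>M\<^esub> a \<odot>\<^bsub>M\<^esub> x = (\<ominus> a \<oplus> a) \<odot>\<^bsub>M\<^esub> x"
    using assms by (simp add: smult_l_distr)
  then show "(\<ominus> a) \<odot>\<^bsub>M\<^esub> x \<oplus>\<^bsub>M\<^esub> a \<odot>\<^bsub>M\<^esub> x = \<zero>\<^bsub>M\<^esub>"
    using assms by (simp add: l_neg smult_l_null)
qed (use assms smult_closed in auto)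

lemma smult_eq_iff:
  assumes a: "a \<in> carrier R" and b: "b \<in> carrier R" and x: "x \<in> carrier M"
  shows "a \<odot>\<^bsub>M\<^esub> x = b \<odot>\<^bsub>M\<^esub> x \<longleftrightarrow> (a \<ominus> b) \<odot>\<^bsub>M\<^esub> x = \<zero>\<^bsub>M\<^esub>"
proof -
  have "(a \<ominus> b) \<odot>\<^bsub>M\<^esub> x = a \<odot>\<^bsub>M\<^esub> x \<oplus>\<^bsub>M\<^esub> \<ominus>\<^bsub>M\<^esub> (b \<odot>\<^bsub>M\<^esub> x)"
    using assms by (simp add: a_minus_def smult_l_distr smult_l_minus)
  moreover have "u \<oplus>\<^bsub>M\<^esub> \<ominus>\<^bsub>M\<^esub> v = \<zero>\<^bsub>M\<^esub> \<longleftrightarrow> u = v" if "u \<in> carrier M" "v \<in> carrier M" for u v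
  proof
    assume "u \<oplus>\<^bsub>M\<^esub> \<ominus>\<^bsub>M\<^esub> v = \<zero>\<^bsub>M\<^esub>"
    then have "u \<oplus>\<^bsub>M\<^esub> \<ominus>\<^bsub>M\<^esub> v \<oplus>\<^bsub>M\<^esub> v = v"
      using that by simp
    then show "u = v"
      using that by (simp add: M.a_assoc M.l_neg)
  qed (use that in \<open>simp add: M.r_neg\<close>)
  ultimately show ?thesis
    using assms smult_closed by simp
qed

lemma submodule_iff:
  "submodule R M N \<longleftrightarrow> N \<subseteq> carrier M \<and> \<zero>\<^bsub>M\<^esub> \<in> N \<and>
     (\<forall>x\<in>N. \<forall>y\<in>N. x \<oplus>\<^bsub>M\<^esub> y \<in> N) \<and> (\<forall>a\<in>carrier R. \<forall>x\<in>N. a \<odot>\<^bsub>M\<^esub> x \<in> N)"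
proof
  assume "submodule R M N"
  then show "N \<subseteq> carrier M \<and> \<zero>\<^bsub>M\<^esub> \<in> N \<and>
      (\<forall>x\<in>N. \<forall>y\<in>N. x \<oplus>\<^bsub>M\<^esub> y \<in> N) \<and> (\<forall>a\<in>carrier R. \<forall>x\<in>N. a \<odot>\<^bsub>M\<^esub> x \<in> N)"
    unfolding submodule_def
    using additive_subgroup.a_closed by (auto simp: additive_subgroup.zero_closed)
next
  assume N: "N \<subseteq> carrier M \<and> \<zero>\<^bsub>M\<^esub> \<in> N \<and>
      (\<forall>x\<in>N. \<forall>y\<in>N. x \<oplus>\<^bsub>M\<^esub> y \<in> N) \<and> (\<forall>a\<in>carrier R. \<forall>x\<in>N. a \<odot>\<^bsub>M\<^esub> x \<in> N)"
  have "\<ominus>\<^bsub>M\<^esub> x \<in> N" if "x \<in> N" for x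
  proof -
    have "\<ominus>\<^bsub>M\<^esub> x = (\<ominus> \<one>) \<odot>\<^bsub>M\<^esub> x"
      using that N by (simp add: smult_l_minus smult_one subset_iff)
    then show ?thesis
      using that N by simp
  qed
  then have "additive_subgroup N M"
    using N by (intro additive_subgroupI group.subgroupI[OF M.a_group]) (auto simp: a_inv_def)
  then show "submodule R M N"
    using N unfolding submodule_def by blast
qed

lemma submodule_span: "submodule R M (mod_span R M S)"
proof -
  have "\<zero>\<^bsub>M\<^esub> \<in> N \<and> (\<forall>x\<in>N. \<forall>y\<in>N. x \<oplus>\<^bsub>M\<^esub> y \<in> N) \<and> (\<forall>a\<in>carrier R. \<forall>x\<in>N. a \<odot>\<^bsub>M\<^esub> x \<in> N)"
    if "submodule R M N" for N
    using that by (simp add: submodule_iff)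
  then show ?thesis
    unfolding submodule_iff[of "mod_span R M S"] by (auto simp: mod_span_def smult_closed)
qed

lemma span_superset: "S \<subseteq> carrier M \<Longrightarrow> S \<subseteq> mod_span R M S"
  unfolding mod_span_def by auto

lemma span_minimal: "submodule R M N \<Longrightarrow> S \<subseteq> N \<Longrightarrow> mod_span R M S \<subseteq> N"
  unfolding mod_span_def by auto

lemma span_mono: "S \<subseteq> T \<Longrightarrow> mod_span R M S \<subseteq> mod_span R M T"
  unfolding mod_span_def by auto

end

lemma mod_hom_closed: "f \<in> mod_hom R M N \<Longrightarrow> x \<in> carrier M \<Longrightarrow> f x \<in> carrier N"
  unfolding mod_hom_def by blast

lemma mod_hom_add:
  "f \<in> mod_hom R M N \<Longrightarrow> x \<in> carrier M \<Longrightarrow> y \<in> carrier M \<Longrightarrow>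
    f (x \<oplus>\<^bsub>M\<^esub> y) = f x \<oplus>\<^bsub>N\<^esub> f y"
  unfolding mod_hom_def by blast

lemma mod_hom_smult:
  "f \<in> mod_hom R M N \<Longrightarrow> a \<in> carrier R \<Longrightarrow> x \<in> carrier M \<Longrightarrow>
    f (a \<odot>\<^bsub>M\<^esub> x) = a \<odot>\<^bsub>N\<^esub> f x"
  unfolding mod_hom_def by blast

lemma mod_hom_comp:
  assumes "f \<in> mod_hom R M N" and "g \<in> mod_hom R N P"
  shows "g \<circ> f \<in> mod_hom R M P"
  using assms unfolding mod_hom_def by (auto simp: Pi_iff)

lemma mod_hom_zero:
  assumes "lmodule R M" and "lmodule R N" and f: "f \<in> mod_hom R M N"
  shows "f \<zero>\<^bsub>M\<^esub> = \<zero>\<^bsub>N\<^esub>"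
proof -
  interpret M: lmodule R M by fact
  interpret N: lmodule R N by fact
  have "f \<zero>\<^bsub>M\<^esub> \<oplus>\<^bsub>N\<^esub> f \<zero>\<^bsub>M\<^esub> = f \<zero>\<^bsub>M\<^esub>"
    using mod_hom_add[OF f M.M.zero_closed M.M.zero_closed] by simp
  then show ?thesis
    using mod_hom_closed[OF f M.M.zero_closed] N.M.add.l_cancel_one[of "f \<zero>\<^bsub>M\<^esub>"] by simp
qed

lemma submodule_vimage:
  assumes M: "lmodule R M" and N: "lmodule R N" and f: "f \<in> mod_hom R M N"
    and P: "submodule R N P"
  shows "submodule R M {x \<in> carrier M. f x \<in> P}"
proof -
  interpret M: lmodule R M by fact
  interpret N: lmodule R N by fact
  show ?thesis
    using P f mod_hom_zero[OF M N f] M.smult_closed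
    unfolding M.submodule_iff N.submodule_iff mod_hom_def by auto
qed

lemma submodule_mod_kernel:
  assumes M: "lmodule R M" and N: "lmodule R N" and f: "f \<in> mod_hom R M N"
  shows "submodule R M (mod_kernel M N f)"
proof -
  interpret N: lmodule R N by fact
  have "submodule R N {\<zero>\<^bsub>N\<^esub>}"
    unfolding N.submodule_iff by (auto simp: N.smult_r_null)
  from submodule_vimage[OF M N f this] show ?thesis
    unfolding mod_kernel_def by simp
qed

lemma mod_hom_span_image:
  assumes M: "lmodule R M" and N: "lmodule R N" and f: "f \<in> mod_hom R M N"
    and S: "S \<subseteq> carrier M"
  shows "f ` mod_span R M S \<subseteq> mod_span R N (f ` S)"
proof -
  interpret M: lmodule R M by fact
  interpret N: lmodule R N by fact
  have "S \<subseteq> {x \<in> carrier M. f x \<in> mod_span R N (f ` S)}"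
    using S f N.span_superset[of "f ` S"] unfolding mod_hom_def by auto
  then have "mod_span R M S \<subseteq> {x \<in> carrier M. f x \<in> mod_span R N (f ` S)}"
    by (intro M.span_minimal submodule_vimage[OF M N f N.submodule_span])
  then show ?thesis by auto
qed

lemma fin_gen_submodule_image:
  assumes M: "lmodule R M" and N: "lmodule R N" and h: "h \<in> mod_hom R M N"
    and fg: "fin_gen_submodule R M P" and sub: "submodule R N (h ` P)"
  shows "fin_gen_submodule R N (h ` P)"
proof -
  obtain S where S: "finite S" "S \<subseteq> P" "mod_span R M S = P"
    using fg unfolding fin_gen_submodule_def by blast
  have "P \<subseteq> carrier M"
    by (subst S(3)[symmetric]) (simp add: mod_span_def)
  then have "h ` P \<subseteq> mod_span R N (h ` S)"
    using mod_hom_span_image[OF M N h] S(2,3) by auto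
  moreover have "mod_span R N (h ` S) \<subseteq> h ` P"
    by (rule lmodule.span_minimal[OF N sub image_mono[OF S(2)]])
  ultimately show ?thesis
    unfolding fin_gen_submodule_def using S(1,2) by (intro exI[of _ "h ` S"]) auto
qed

section \<open>Cosets and left ideals\<close>

context ring
begin

lemma abelian_subgroup_of_additive: "additive_subgroup I R \<Longrightarrow> abelian_subgroup I R"
  by (rule abelian_subgroupI3[OF _ is_abelian_group])

lemma a_rcos_mem_iff:
  assumes "additive_subgroup I R" and "a \<in> carrier R"
  shows "x \<in> I +> a \<longleftrightarrow> x \<in> carrier R \<and> x \<ominus> a \<in> I"
proof -
  interpret abelian_subgroup I R
    using assms(1) by (rule abelian_subgroup_of_additive)
  show ?thesis
    using a_elemrcos_carrier[OF assms(2)] a_rcos_module_minus[OF ring_axioms assms(2)] by blast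
qed

lemma a_rcos_eq_iff:
  assumes I: "additive_subgroup I R" and a: "a \<in> carrier R" and b: "b \<in> carrier R"
  shows "I +> a = I +> b \<longleftrightarrow> a \<ominus> b \<in> I"
proof
  interpret abelian_subgroup I R
    using I by (rule abelian_subgroup_of_additive)
  show "a \<ominus> b \<in> I" if "I +> a = I +> b"
    using that a_rcos_self[OF a] a_rcos_mem_iff[OF I b] by auto
  show "I +> a = I +> b" if "a \<ominus> b \<in> I"
    using that a_repr_independence'[of a b] a_rcos_mem_iff[OF I b] a b by auto
qed

lemma a_rcos_eq_self_iff:
  assumes I: "additive_subgroup I R" and a: "a \<in> carrier R"
  shows "I +> a = I \<longleftrightarrow> a \<in> I"
proof -
  interpret abelian_subgroup I R
    using I by (rule abelian_subgroup_of_additive)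
  show ?thesis
    using a_rcos_eq_iff[OF I a, of \<zero>] a_rcos_const[OF additive_subgroup.zero_closed[OF I]] a
    by (simp add: minus_eq)
qed

lemma a_rcosets_eq_image: "a_rcosets I = (\<lambda>a. I +> a) ` carrier R"
  unfolding A_RCOSETS_def' by auto

lemma rcos_mem_a_rcosets [simp]: "a \<in> carrier R \<Longrightarrow> I +> a \<in> a_rcosets I"
  by (auto simp: a_rcosets_eq_image)

lemma a_rcosetsE:
  assumes "X \<in> a_rcosets I"
  obtains a where "a \<in> carrier R" "X = I +> a"
  using assms by (auto simp: a_rcosets_eq_image)

lemma carrier_FactRing: "carrier (R Quot I) = (\<lambda>a. I +> a) ` carrier R"
  by (simp add: FactRing_def a_rcosets_eq_image)

lemma regular_module_simps [simp]:
  "carrier (regular_module R) = carrier R"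
  "add (regular_module R) = add R"
  "zero (regular_module R) = zero R"
  "smult (regular_module R) = mult R"
  by (simp_all add: regular_module_def)

lemma lmodule_regular: "lmodule R (regular_module R)"
proof -
  have "abelian_group (regular_module R)"
    by (rule abelian_groupI) (auto simp: a_assoc a_comm a_lcomm intro: l_neg)
  then show ?thesis
    unfolding lmodule_def lmodule_axioms_def by (auto simp: ring_axioms l_distr r_distr m_assoc)
qed

lemma left_ideal_iff:
  "left_ideal R I \<longleftrightarrow> I \<subseteq> carrier R \<and> \<zero> \<in> I \<and> (\<forall>x\<in>I. \<forall>y\<in>I. x \<oplus> y \<in> I) \<and>
     (\<forall>a\<in>carrier R. \<forall>x\<in>I. a \<otimes> x \<in> I)"
  using lmodule.submodule_iff[OF lmodule_regular] by simp

lemma left_ideal_additive_subgroup: "left_ideal R I \<Longrightarrow> additive_subgroup I R"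
  unfolding submodule_def additive_subgroup_def subgroup_def regular_module_def a_inv_def m_inv_def
  by simp

lemma left_ideal_abelian_subgroup: "left_ideal R I \<Longrightarrow> abelian_subgroup I R"
  by (intro abelian_subgroup_of_additive left_ideal_additive_subgroup)

lemma left_ideal_subset: "left_ideal R I \<Longrightarrow> I \<subseteq> carrier R"
  unfolding left_ideal_iff by blast

lemma left_ideal_zero_closed: "left_ideal R I \<Longrightarrow> \<zero> \<in> I"
  unfolding left_ideal_iff by blast

lemma left_ideal_a_closed: "left_ideal R I \<Longrightarrow> x \<in> I \<Longrightarrow> y \<in> I \<Longrightarrow> x \<oplus> y \<in> I"
  unfolding left_ideal_iff by blast

lemma left_ideal_m_closed: "left_ideal R I \<Longrightarrow> a \<in> carrier R \<Longrightarrow> x \<in> I \<Longrightarrow> a \<otimes> x \<in> I"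
  unfolding left_ideal_iff by blast

lemma left_ideal_mem_of_diff:
  assumes I: "left_ideal R I" and b: "b \<in> I" and a: "a \<in> carrier R" and ab: "a \<ominus> b \<in> I"
  shows "a \<in> I"
proof -
  have "a = (a \<ominus> b) \<oplus> b"
    using a b left_ideal_subset[OF I] by (auto simp: a_minus_def a_assoc l_neg)
  then show ?thesis
    using left_ideal_a_closed[OF I ab b] by simp
qed

lemma left_ideal_cancel:
  assumes I: "left_ideal R I" and x: "x \<in> I" and y: "y \<in> carrier R" and xy: "x \<oplus> y \<in> I"
  shows "y \<in> I"
proof -
  have "\<ominus> x \<oplus> (x \<oplus> y) = y"
    using x y left_ideal_subset[OF I] by (auto intro: r_neg1)
  moreover have "\<ominus> x \<oplus> (x \<oplus> y) \<in> I"
    using additive_subgroup.a_inv_closed[OF left_ideal_additive_subgroup[OF I] x]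
    by (rule left_ideal_a_closed[OF I _ xy])
  ultimately show ?thesis
    by simp
qed

lemma left_ideal_rcos_subset:
  assumes I: "left_ideal R I" and J: "additive_subgroup J R" "J \<subseteq> I" and b: "b \<in> I"
  shows "J +> b \<subseteq> I"
proof
  fix x
  assume "x \<in> J +> b"
  then have "x \<in> carrier R" "x \<ominus> b \<in> J"
    using a_rcos_mem_iff[OF J(1)] b left_ideal_subset[OF I] by auto
  then show "x \<in> I"
    using left_ideal_mem_of_diff[OF I b] J(2) by blast
qed

lemma left_ideal_carrier: "left_ideal R (carrier R)"
  unfolding left_ideal_iff by auto

lemma left_ideal_Int: "left_ideal R I \<Longrightarrow> left_ideal R L \<Longrightarrow> left_ideal R (I \<inter> L)"
  unfolding left_ideal_iff by blast

lemma left_ideal_sum: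
  assumes I: "left_ideal R I" and K: "left_ideal R K"
  shows "left_ideal R {x \<oplus> y | x y. x \<in> I \<and> y \<in> K}"
  unfolding left_ideal_iff
proof (intro conjI ballI)
  show "{x \<oplus> y | x y. x \<in> I \<and> y \<in> K} \<subseteq> carrier R"
    using left_ideal_subset[OF I] left_ideal_subset[OF K] by auto
  show "\<zero> \<in> {x \<oplus> y | x y. x \<in> I \<and> y \<in> K}"
    using left_ideal_zero_closed[OF I] left_ideal_zero_closed[OF K] by force
next
  fix a b
  assume "a \<in> {x \<oplus> y | x y. x \<in> I \<and> y \<in> K}" "b \<in> {x \<oplus> y | x y. x \<in> I \<and> y \<in> K}"
  then obtain x1 y1 x2 y2 where xy: "x1 \<in> I" "y1 \<in> K" "x2 \<in> I" "y2 \<in> K"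
    and "a = x1 \<oplus> y1" "b = x2 \<oplus> y2"
    by blast
  moreover have "x1 \<in> carrier R" "y1 \<in> carrier R" "x2 \<in> carrier R" "y2 \<in> carrier R"
    using xy left_ideal_subset[OF I] left_ideal_subset[OF K] by auto
  ultimately have "a \<oplus> b = (x1 \<oplus> x2) \<oplus> (y1 \<oplus> y2)"
    by (simp add: a_ac)
  then show "a \<oplus> b \<in> {x \<oplus> y | x y. x \<in> I \<and> y \<in> K}"
    using left_ideal_a_closed[OF I xy(1,3)] left_ideal_a_closed[OF K xy(2,4)] by blast
next
  fix r a
  assume r: "r \<in> carrier R" and "a \<in> {x \<oplus> y | x y. x \<in> I \<and> y \<in> K}"
  then obtain x y where xy: "x \<in> I" "y \<in> K" and "a = x \<oplus> y"
    by blast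
  moreover have "x \<in> carrier R" "y \<in> carrier R"
    using xy left_ideal_subset[OF I] left_ideal_subset[OF K] by auto
  ultimately have "r \<otimes> a = r \<otimes> x \<oplus> r \<otimes> y"
    using r by (simp add: r_distr)
  then show "r \<otimes> a \<in> {x \<oplus> y | x y. x \<in> I \<and> y \<in> K}"
    using left_ideal_m_closed[OF I r xy(1)] left_ideal_m_closed[OF K r xy(2)] by blast
qed

lemma left_ideal_maximal: "maximal_left_ideal R m \<Longrightarrow> left_ideal R m"
  unfolding maximal_left_ideal_def by blast

lemma mod_hom_right_mult:
  assumes c: "c \<in> carrier R"
  shows "(\<lambda>z. z \<otimes> c) \<in> mod_hom R (regular_module R) (regular_module R)"
  unfolding mod_hom_def using c by (auto simp: l_distr m_assoc)

end

section \<open>Simple modules and the Jacobson radical\<close>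

text \<open>The fields \<open>mult\<close> and \<open>one\<close> are unused dummies.\<close>

definition quotient_module :: "('a, 'm) ring_scheme \<Rightarrow> 'a set \<Rightarrow> ('a, 'a set) module" where
  "quotient_module R I =
    \<lparr>carrier = a_rcosets\<^bsub>R\<^esub> I, mult = (\<lambda>X Y. X), one = I, zero = I, add = set_add R,
     smult = (\<lambda>r X. \<Union>a\<in>X. I +>\<^bsub>R\<^esub> (r \<otimes>\<^bsub>R\<^esub> a))\<rparr>"

context ring
begin

lemma quotient_module_simps [simp]:
  "carrier (quotient_module R I) = a_rcosets I"
  "zero (quotient_module R I) = I"
  "add (quotient_module R I) = set_add R"
  by (simp_all add: quotient_module_def)

lemma carrier_quotient_module: "carrier (quotient_module R I) = carrier (R Quot I)"
  by (simp add: FactRing_def)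

lemma quotient_module_smult:
  assumes I: "left_ideal R I" and r: "r \<in> carrier R" and a: "a \<in> carrier R"
  shows "r \<odot>\<^bsub>quotient_module R I\<^esub> (I +> a) = I +> (r \<otimes> a)"
proof -
  have sub: "additive_subgroup I R"
    using I by (rule left_ideal_additive_subgroup)
  have "I +> (r \<otimes> a') = I +> (r \<otimes> a)" if "a' \<in> I +> a" for a'
  proof -
    have a': "a' \<in> carrier R" "a' \<ominus> a \<in> I"
      using that a_rcos_mem_iff[OF sub a] by auto
    moreover have "r \<otimes> a' \<ominus> r \<otimes> a = r \<otimes> (a' \<ominus> a)"
      using r a a'(1) by (simp add: a_minus_def r_distr r_minus)
    ultimately have "r \<otimes> a' \<ominus> r \<otimes> a \<in> I"
      using left_ideal_m_closed[OF I r] by simp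
    then show ?thesis
      using a_rcos_eq_iff[OF sub] r a a'(1) by simp
  qed
  moreover have "I +> a \<noteq> {}"
    using abelian_subgroup.a_rcos_self[OF abelian_subgroup_of_additive[OF sub] a] by blast
  ultimately show ?thesis
    by (simp add: quotient_module_def)
qed

lemma lmodule_quotient_module:
  assumes I: "left_ideal R I"
  shows "lmodule R (quotient_module R I)"
proof -
  let ?Q = "quotient_module R I"
  interpret abelian_subgroup I R
    using I by (rule left_ideal_abelian_subgroup)
  have G: "comm_group (R A_Mod I)"
    by (rule a_factorgroup_is_comm_group)
  have "abelian_group ?Q"
  proof (rule abelian_groupI)
  qed (use comm_groupE[OF G] group.l_inv_ex[OF comm_group.axioms(2)[OF G]] in
    \<open>auto simp: A_FactGroup_def'\<close>)
  then show ?thesis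
    unfolding lmodule_def lmodule_axioms_def
    by (auto elim!: a_rcosetsE simp: ring_axioms quotient_module_smult[OF I] a_rcos_sum
        l_distr r_distr m_assoc)
qed

lemma mod_hom_rcos:
  assumes "left_ideal R I"
  shows "(\<lambda>a. I +> a) \<in> mod_hom R (regular_module R) (quotient_module R I)"
  unfolding mod_hom_def
  using abelian_subgroup.a_rcos_sum[OF left_ideal_abelian_subgroup[OF assms]]
    quotient_module_smult[OF assms]
  by auto

lemma left_ideal_rcos_const: "left_ideal R I \<Longrightarrow> a \<in> I \<Longrightarrow> I +> a = I"
  by (rule abelian_subgroup.a_rcos_const[OF left_ideal_abelian_subgroup])

lemma submodule_quotient_module:
  assumes I: "left_ideal R I" and N: "submodule R (quotient_module R I) N"
  shows "left_ideal R {a \<in> carrier R. I +> a \<in> N}" and "I \<subseteq> {a \<in> carrier R. I +> a \<in> N}"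
    and "N = (\<lambda>a. I +> a) ` {a \<in> carrier R. I +> a \<in> N}"
proof -
  interpret Q: lmodule R "quotient_module R I"
    using I by (rule lmodule_quotient_module)
  show "left_ideal R {a \<in> carrier R. I +> a \<in> N}"
    using submodule_vimage[OF lmodule_regular Q.lmodule_axioms mod_hom_rcos[OF I] N] by simp
  have N_sub: "N \<subseteq> a_rcosets I" and zero_N: "I \<in> N"
    using N unfolding Q.submodule_iff by auto
  then show "N = (\<lambda>a. I +> a) ` {a \<in> carrier R. I +> a \<in> N}"
    by (auto elim!: a_rcosetsE)
  show "I \<subseteq> {a \<in> carrier R. I +> a \<in> N}"
    using left_ideal_rcos_const[OF I] left_ideal_subset[OF I] zero_N by auto
qed

lemma simple_quotient_module:
  assumes m: "maximal_left_ideal R m"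
  shows "simple_module R (quotient_module R m)"
proof -
  let ?Q = "quotient_module R m"
  have L: "left_ideal R m" and m_max: "\<And>K. left_ideal R K \<Longrightarrow> m \<subseteq> K \<Longrightarrow> K = m \<or> K = carrier R"
    using m unfolding maximal_left_ideal_def by blast+
  obtain a where a: "a \<in> carrier R" "a \<notin> m"
    using m left_ideal_subset[OF L] unfolding maximal_left_ideal_def by blast
  then have "m +> a \<in> carrier ?Q" "m +> a \<noteq> m"
    using a_rcos_eq_self_iff[OF left_ideal_additive_subgroup[OF L] a(1)] by auto
  then have nontrivial: "carrier ?Q \<noteq> {\<zero>\<^bsub>?Q\<^esub>}"
    by auto
  have "N = {\<zero>\<^bsub>?Q\<^esub>} \<or> N = carrier ?Q" if N: "submodule R ?Q N" for N
  proof -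
    let ?K = "{a \<in> carrier R. m +> a \<in> N}"
    note K = submodule_quotient_module[OF L N]
    consider "?K = m" | "?K = carrier R"
      using m_max[OF K(1,2)] by blast
    then show ?thesis
    proof cases
      case 1
      then have "N = {m}"
        using K(3) left_ideal_rcos_const[OF L] left_ideal_zero_closed[OF L] by auto
      then show ?thesis
        by simp
    next
      case 2
      then show ?thesis
        using K(3) by (simp add: a_rcosets_eq_image)
    qed
  qed
  then show ?thesis
    unfolding simple_module_def left_module_iff_lmodule using lmodule_quotient_module[OF L] nontrivial
    by blast
qed

end

definition ann :: "('a, 'm) ring_scheme \<Rightarrow> ('a, 'b, 'n) module_scheme \<Rightarrow> 'b \<Rightarrow> 'a set" where
  "ann R M x = {a \<in> carrier R. a \<odot>\<^bsub>M\<^esub> x = \<zero>\<^bsub>M\<^esub>}"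

lemma simple_module_lmodule: "simple_module R M \<Longrightarrow> lmodule R M"
  unfolding simple_module_def left_module_iff_lmodule by blast

lemma simple_module_nonzero:
  assumes "simple_module R M"
  obtains x where "x \<in> carrier M" "x \<noteq> \<zero>\<^bsub>M\<^esub>"
  using assms abelian_groupE(2)[OF lmodule.abelian_group_M[OF simple_module_lmodule[OF assms]]]
  unfolding simple_module_def by blast

context lmodule
begin

lemma left_ideal_ann:
  assumes "x \<in> carrier M"
  shows "left_ideal R (ann R M x)"
  unfolding ann_def left_ideal_iff
  using assms smult_l_null smult_l_distr smult_assoc1 smult_r_null by auto

lemma submodule_smult_left_ideal:
  assumes x: "x \<in> carrier M" and K: "left_ideal R K"
  shows "submodule R M {a \<odot>\<^bsub>M\<^esub> x | a. a \<in> K}"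
  unfolding submodule_iff
proof (intro conjI ballI)
  show "{a \<odot>\<^bsub>M\<^esub> x | a. a \<in> K} \<subseteq> carrier M"
    using left_ideal_subset[OF K] x smult_closed by auto
  show "\<zero>\<^bsub>M\<^esub> \<in> {a \<odot>\<^bsub>M\<^esub> x | a. a \<in> K}"
    using left_ideal_zero_closed[OF K] smult_l_null[OF x] by force
next
  fix y z
  assume "y \<in> {a \<odot>\<^bsub>M\<^esub> x | a. a \<in> K}" "z \<in> {a \<odot>\<^bsub>M\<^esub> x | a. a \<in> K}"
  then obtain a b where ab: "a \<in> K" "b \<in> K" and "y = a \<odot>\<^bsub>M\<^esub> x" "z = b \<odot>\<^bsub>M\<^esub> x"
    by blast
  moreover have "a \<in> carrier R" "b \<in> carrier R"
    using ab left_ideal_subset[OF K] by auto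
  ultimately have "y \<oplus>\<^bsub>M\<^esub> z = (a \<oplus> b) \<odot>\<^bsub>M\<^esub> x"
    using x by (simp add: smult_l_distr)
  then show "y \<oplus>\<^bsub>M\<^esub> z \<in> {a \<odot>\<^bsub>M\<^esub> x | a. a \<in> K}"
    using left_ideal_a_closed[OF K ab] by blast
next
  fix r y
  assume "r \<in> carrier R" "y \<in> {a \<odot>\<^bsub>M\<^esub> x | a. a \<in> K}"
  then obtain a where r: "r \<in> carrier R" and a: "a \<in> K" and "y = a \<odot>\<^bsub>M\<^esub> x"
    by blast
  then have "r \<odot>\<^bsub>M\<^esub> y = (r \<otimes> a) \<odot>\<^bsub>M\<^esub> x"
    using x left_ideal_subset[OF K] by (auto simp: smult_assoc1)
  then show "r \<odot>\<^bsub>M\<^esub> y \<in> {a \<odot>\<^bsub>M\<^esub> x | a. a \<in> K}"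
    using left_ideal_m_closed[OF K r a] by blast
qed

lemma smult_fibre_eq_rcos:
  assumes x: "x \<in> carrier M" and a: "a \<in> carrier R"
  shows "{b \<in> carrier R. b \<odot>\<^bsub>M\<^esub> x = a \<odot>\<^bsub>M\<^esub> x} = ann R M x +> a"
  using smult_eq_iff[OF _ a x] a_rcos_mem_iff[OF left_ideal_additive_subgroup[OF left_ideal_ann[OF x]] a] a
  unfolding ann_def by auto

lemma mod_hom_smult_fibre:
  assumes x: "x \<in> carrier M" and cyclic: "carrier M = (\<lambda>a. a \<odot>\<^bsub>M\<^esub> x) ` carrier R"
  shows "(\<lambda>y. {b \<in> carrier R. b \<odot>\<^bsub>M\<^esub> x = y}) \<in> mod_hom R M (quotient_module R (ann R M x))"
    (is "?f \<in> mod_hom R M ?Q")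
  unfolding mod_hom_def
proof (intro CollectI conjI ballI funcsetI)
  let ?m = "ann R M x"
  have L: "left_ideal R ?m"
    using x by (rule left_ideal_ann)
  fix y
  assume "y \<in> carrier M"
  then obtain a where a: "a \<in> carrier R" and y: "y = a \<odot>\<^bsub>M\<^esub> x"
    using cyclic by blast
  then show "?f y \<in> carrier ?Q"
    using smult_fibre_eq_rcos[OF x] by simp
  fix r
  assume r: "r \<in> carrier R"
  have "?f (r \<odot>\<^bsub>M\<^esub> y) = ?m +> (r \<otimes> a)"
    using smult_fibre_eq_rcos[OF x, of "r \<otimes> a"] a r x y by (simp add: smult_assoc1)
  also have "\<dots> = r \<odot>\<^bsub>?Q\<^esub> ?f y"
    using quotient_module_smult[OF L r a] smult_fibre_eq_rcos[OF x a] y by simp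
  finally show "?f (r \<odot>\<^bsub>M\<^esub> y) = r \<odot>\<^bsub>?Q\<^esub> ?f y" .
next
  let ?m = "ann R M x"
  fix y z
  assume "y \<in> carrier M" "z \<in> carrier M"
  then obtain a b where a: "a \<in> carrier R" and b: "b \<in> carrier R"
    and y: "y = a \<odot>\<^bsub>M\<^esub> x" and z: "z = b \<odot>\<^bsub>M\<^esub> x"
    using cyclic by blast
  then have "?f (y \<oplus>\<^bsub>M\<^esub> z) = ?m +> (a \<oplus> b)"
    using smult_fibre_eq_rcos[OF x, of "a \<oplus> b"] x by (simp add: smult_l_distr)
  also have "\<dots> = ?f y \<oplus>\<^bsub>?Q\<^esub> ?f z"
    using abelian_subgroup.a_rcos_sum[OF left_ideal_abelian_subgroup[OF left_ideal_ann[OF x]] a b]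
      smult_fibre_eq_rcos[OF x] a b y z
    by simp
  finally show "?f (y \<oplus>\<^bsub>M\<^esub> z) = ?f y \<oplus>\<^bsub>?Q\<^esub> ?f z" .
qed

lemma mod_iso_quotient_ann:
  assumes x: "x \<in> carrier M" and cyclic: "carrier M = (\<lambda>a. a \<odot>\<^bsub>M\<^esub> x) ` carrier R"
  shows "mod_iso R M (quotient_module R (ann R M x))"
proof -
  let ?f = "\<lambda>y. {b \<in> carrier R. b \<odot>\<^bsub>M\<^esub> x = y}"
  have "inj_on ?f (carrier M)"
  proof (rule inj_onI)
    fix y z
    assume "y \<in> carrier M" "z \<in> carrier M" and f_eq: "?f y = ?f z"
    then obtain a where "a \<in> carrier R" "y = a \<odot>\<^bsub>M\<^esub> x"
      using cyclic by blast
    then show "y = z"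
      using f_eq by blast
  qed
  moreover have "?f ` carrier M = (\<lambda>a. ann R M x +> a) ` carrier R"
    unfolding cyclic image_image by (rule image_cong) (simp_all add: smult_fibre_eq_rcos[OF x])
  ultimately show ?thesis
    unfolding mod_iso_def bij_betw_def quotient_module_simps a_rcosets_eq_image
    using mod_hom_smult_fibre[OF x cyclic] by blast
qed

end

context ring
begin

lemma simple_module_eq_smult_left_ideal:
  assumes S: "simple_module R M" and x: "x \<in> carrier M"
    and K: "left_ideal R K" and k: "k \<in> K" "k \<odot>\<^bsub>M\<^esub> x \<noteq> \<zero>\<^bsub>M\<^esub>"
  shows "carrier M = {a \<odot>\<^bsub>M\<^esub> x | a. a \<in> K}"
proof -
  have "submodule R M {a \<odot>\<^bsub>M\<^esub> x | a. a \<in> K}"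
    using lmodule.submodule_smult_left_ideal[OF simple_module_lmodule[OF S] x K] .
  moreover have "k \<odot>\<^bsub>M\<^esub> x \<in> {a \<odot>\<^bsub>M\<^esub> x | a. a \<in> K}"
    using k by blast
  ultimately show ?thesis
    using S k(2) unfolding simple_module_def by blast
qed

lemma simple_module_cyclic:
  assumes S: "simple_module R M" and x: "x \<in> carrier M" "x \<noteq> \<zero>\<^bsub>M\<^esub>"
  shows "carrier M = (\<lambda>a. a \<odot>\<^bsub>M\<^esub> x) ` carrier R"
  using simple_module_eq_smult_left_ideal[OF S x(1) left_ideal_carrier one_closed] x
    lmodule.smult_one[OF simple_module_lmodule[OF S]]
  by auto

lemma maximal_left_ideal_ann:
  assumes S: "simple_module R M" and x: "x \<in> carrier M" "x \<noteq> \<zero>\<^bsub>M\<^esub>"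
  shows "maximal_left_ideal R (ann R M x)"
proof -
  interpret M: lmodule R M
    using S by (rule simple_module_lmodule)
  have L: "left_ideal R (ann R M x)"
    using x(1) by (rule M.left_ideal_ann)
  have "\<one> \<notin> ann R M x"
    using M.smult_one[OF x(1)] x(2) unfolding ann_def by simp
  then have proper: "ann R M x \<noteq> carrier R"
    by blast
  have "K = ann R M x \<or> K = carrier R"
    if K: "left_ideal R K" and ann_K: "ann R M x \<subseteq> K" for K
  proof (cases "K = ann R M x")
    case False
    then obtain k where k: "k \<in> K" "k \<notin> ann R M x"
      using ann_K by blast
    then have "k \<odot>\<^bsub>M\<^esub> x \<noteq> \<zero>\<^bsub>M\<^esub>"
      using left_ideal_subset[OF K] unfolding ann_def by auto
    then have M_eq: "carrier M = {a \<odot>\<^bsub>M\<^esub> x | a. a \<in> K}"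
      using simple_module_eq_smult_left_ideal[OF S x(1) K k(1)] by blast
    have "a \<in> K" if a: "a \<in> carrier R" for a
    proof -
      obtain k' where k': "k' \<in> K" "a \<odot>\<^bsub>M\<^esub> x = k' \<odot>\<^bsub>M\<^esub> x"
        using M_eq M.smult_closed[OF a x(1)] by blast
      then have "a \<ominus> k' \<in> ann R M x"
        using M.smult_eq_iff[OF a _ x(1)] left_ideal_subset[OF K] a unfolding ann_def by auto
      then show ?thesis
        using left_ideal_mem_of_diff[OF K k'(1) a] ann_K by blast
    qed
    then show ?thesis
      using left_ideal_subset[OF K] by blast
  qed simp
  then show ?thesis
    unfolding maximal_left_ideal_def using L proper by blast
qed

lemma jacobson_radical_subset: "maximal_left_ideal R m \<Longrightarrow> jacobson_radical R \<subseteq> m"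
  unfolding jacobson_radical_def by blast

lemma left_ideal_jacobson_radical: "left_ideal R (jacobson_radical R)"
  unfolding left_ideal_iff unfolding jacobson_radical_def
  by (auto intro: left_ideal_zero_closed left_ideal_a_closed left_ideal_m_closed left_ideal_maximal)

lemma jacobson_radical_smult_simple:
  assumes S: "simple_module R M" and x: "x \<in> carrier M" and j: "j \<in> jacobson_radical R"
  shows "j \<odot>\<^bsub>M\<^esub> x = \<zero>\<^bsub>M\<^esub>"
proof (cases "x = \<zero>\<^bsub>M\<^esub>")
  case True
  then show ?thesis
    using lmodule.smult_r_null[OF simple_module_lmodule[OF S]] j
    unfolding jacobson_radical_def by blast
next
  case False
  then show ?thesis
    using jacobson_radical_subset[OF maximal_left_ideal_ann[OF S x]] j unfolding ann_def by blast
qed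

text \<open>The Jacobson radical, defined via left ideals, is also closed under right
  multiplication because it annihilates the simple modules \<open>A/m\<close>.\<close>

lemma ideal_jacobson_radical: "ideal (jacobson_radical R) R"
proof -
  let ?J = "jacobson_radical R"
  have "j \<otimes> r \<in> m" if j: "j \<in> ?J" and r: "r \<in> carrier R" and m: "maximal_left_ideal R m" for j r m
  proof -
    have L: "left_ideal R m"
      using m by (rule left_ideal_maximal)
    have "j \<odot>\<^bsub>quotient_module R m\<^esub> (m +> r) = m"
      using jacobson_radical_smult_simple[OF simple_quotient_module[OF m], of "m +> r" j] j r by simp
    then have "m +> (j \<otimes> r) = m"
      using quotient_module_smult[OF L _ r] j unfolding jacobson_radical_def by auto
    then show ?thesis
      using a_rcos_eq_self_iff[OF left_ideal_additive_subgroup[OF L], of "j \<otimes> r"] j r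
      unfolding jacobson_radical_def by auto
  qed
  then have "j \<otimes> r \<in> ?J" if "j \<in> ?J" and "r \<in> carrier R" for j r
    using that unfolding jacobson_radical_def by auto
  then show ?thesis
    using left_ideal_jacobson_radical left_ideal_additive_subgroup[OF left_ideal_jacobson_radical]
    by (intro idealI ring_axioms) (auto simp: additive_subgroup_def left_ideal_m_closed)
qed

end

section \<open>Free modules and finite presentations\<close>

definition free_basis :: "('a, 'm) ring_scheme \<Rightarrow> nat \<Rightarrow> nat \<Rightarrow> 'a" where
  "free_basis R j = (\<lambda>i. if i = j then \<one>\<^bsub>R\<^esub> else \<zero>\<^bsub>R\<^esub>)"

context ring
begin

lemma free_module_simps [simp]:
  "carrier (free_module R n) = {v. (\<forall>i<n. v i \<in> carrier R) \<and> (\<forall>i\<ge>n. v i = \<zero>)}"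
  "zero (free_module R n) = (\<lambda>i. \<zero>)"
  "add (free_module R n) = (\<lambda>v w i. v i \<oplus> w i)"
  "smult (free_module R n) = (\<lambda>a v i. a \<otimes> v i)"
  by (simp_all add: free_module_def)

lemma free_module_coord_closed: "v \<in> carrier (free_module R n) \<Longrightarrow> v i \<in> carrier R"
  by (cases "i < n") auto

lemma free_basis_closed: "j < n \<Longrightarrow> free_basis R j \<in> carrier (free_module R n)"
  unfolding free_basis_def by simp

lemma lmodule_free_module: "lmodule R (free_module R n)"
proof -
  note coord = free_module_coord_closed[of _ n]
  have "abelian_group (free_module R n)"
  proof (rule abelian_groupI)
    fix u v w
    assume u: "u \<in> carrier (free_module R n)" and v: "v \<in> carrier (free_module R n)"
      and w: "w \<in> carrier (free_module R n)"
    show "u \<oplus>\<^bsub>free_module R n\<^esub> v \<oplus>\<^bsub>free_module R n\<^esub> w =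
        u \<oplus>\<^bsub>free_module R n\<^esub> (v \<oplus>\<^bsub>free_module R n\<^esub> w)"
      using coord[OF u] coord[OF v] coord[OF w] by (simp add: fun_eq_iff a_assoc)
  next
    fix v w
    assume v: "v \<in> carrier (free_module R n)" and w: "w \<in> carrier (free_module R n)"
    then show "v \<oplus>\<^bsub>free_module R n\<^esub> w \<in> carrier (free_module R n)"
      by simp
    show "v \<oplus>\<^bsub>free_module R n\<^esub> w = w \<oplus>\<^bsub>free_module R n\<^esub> v"
      using coord[OF v] coord[OF w] by (simp add: fun_eq_iff a_comm)
  next
    fix v
    assume v: "v \<in> carrier (free_module R n)"
    then show "\<zero>\<^bsub>free_module R n\<^esub> \<oplus>\<^bsub>free_module R n\<^esub> v = v"
      using coord[OF v] by (simp add: fun_eq_iff)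
    have "(\<lambda>i. \<ominus> v i) \<in> carrier (free_module R n)"
      using v by simp
    moreover have "(\<lambda>i. \<ominus> v i) \<oplus>\<^bsub>free_module R n\<^esub> v = \<zero>\<^bsub>free_module R n\<^esub>"
      using coord[OF v] by (simp add: fun_eq_iff l_neg)
    ultimately show "\<exists>w\<in>carrier (free_module R n). w \<oplus>\<^bsub>free_module R n\<^esub> v = \<zero>\<^bsub>free_module R n\<^esub>"
      by blast
  qed simp
  then show ?thesis
    unfolding lmodule_def lmodule_axioms_def
    using coord by (auto simp: ring_axioms fun_eq_iff l_distr r_distr m_assoc)
qed

lemma mod_hom_free_module_1:
  "(\<lambda>a i. if i = 0 then a else \<zero>) \<in> mod_hom R (regular_module R) (free_module R 1)"
  unfolding mod_hom_def by (auto simp: fun_eq_iff)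

lemma free_module_1_eq:
  "v \<in> carrier (free_module R 1) \<Longrightarrow> v = (\<lambda>i. if i = 0 then v 0 else \<zero>)"
  by (auto simp: fun_eq_iff)

lemma mod_hom_free_module_peel:
  assumes N: "lmodule R N" and u: "u \<in> mod_hom R (free_module R n) N"
    and w: "w \<in> carrier (free_module R n)" and k: "k < n"
  shows "u w = u (w(k := \<zero>)) \<oplus>\<^bsub>N\<^esub> w k \<odot>\<^bsub>N\<^esub> u (free_basis R k)"
proof -
  let ?F = "free_module R n"
  have wk: "w k \<in> carrier R"
    using w by (rule free_module_coord_closed)
  have w': "w(k := \<zero>) \<in> carrier ?F"
    using w by simp
  have "w = w(k := \<zero>) \<oplus>\<^bsub>?F\<^esub> w k \<odot>\<^bsub>?F\<^esub> free_basis R k"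
    using free_module_coord_closed[OF w] unfolding free_basis_def by (auto simp: fun_eq_iff)
  then have "u w = u (w(k := \<zero>) \<oplus>\<^bsub>?F\<^esub> w k \<odot>\<^bsub>?F\<^esub> free_basis R k)"
    by (rule arg_cong)
  also have "\<dots> = u (w(k := \<zero>)) \<oplus>\<^bsub>N\<^esub> w k \<odot>\<^bsub>N\<^esub> u (free_basis R k)"
    using mod_hom_add[OF u w' lmodule.smult_closed[OF lmodule_free_module wk free_basis_closed[OF k]]]
      mod_hom_smult[OF u wk free_basis_closed[OF k]] by simp
  finally show ?thesis .
qed

lemma free_module_hom_ext:
  assumes N: "lmodule R N"
    and f: "f \<in> mod_hom R (free_module R n) N" and h: "h \<in> mod_hom R (free_module R n) N"
    and basis: "\<And>j. j < n \<Longrightarrow> f (free_basis R j) = h (free_basis R j)"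
    and w: "w \<in> carrier (free_module R n)"
  shows "f w = h w"
proof -
  let ?F = "free_module R n"
  have support: "\<forall>w \<in> carrier ?F. (\<forall>i\<ge>k. w i = \<zero>) \<longrightarrow> f w = h w" for k
  proof (induction k)
    case 0
    show ?case
    proof (intro ballI impI)
      fix w
      assume "w \<in> carrier ?F" and "\<forall>i\<ge>0. w i = \<zero>"
      then have "w = \<zero>\<^bsub>?F\<^esub>"
        by (simp add: fun_eq_iff)
      then show "f w = h w"
        using mod_hom_zero[OF lmodule_free_module N f] mod_hom_zero[OF lmodule_free_module N h] by simp
    qed
  next
    case (Suc k)
    show ?case
    proof (intro ballI impI)
      fix w
      assume w: "w \<in> carrier ?F" and supp: "\<forall>i\<ge>Suc k. w i = \<zero>"
      then have "w(k := \<zero>) \<in> carrier ?F" "\<forall>i\<ge>k. (w(k := \<zero>)) i = \<zero>"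
        by (auto simp: Suc_le_eq)
      with Suc.IH have IH: "f (w(k := \<zero>)) = h (w(k := \<zero>))"
        by blast
      show "f w = h w"
      proof (cases "k < n")
        case True
        then show ?thesis
          using mod_hom_free_module_peel[OF N f w True] mod_hom_free_module_peel[OF N h w True]
            IH basis[OF True] by simp
      next
        case False
        then have "w(k := \<zero>) = w"
          using w by (simp add: fun_upd_idem)
        then show ?thesis
          using IH by simp
      qed
    qed
  qed
  have "\<forall>i\<ge>n. w i = \<zero>"
    using w by simp
  with support[of n] w show ?thesis
    by blast
qed

lemma mod_hom_lin_comb:
  assumes c: "\<And>j. j < n \<Longrightarrow> c j \<in> carrier R"
  shows "(\<lambda>w. \<Oplus>j\<in>{..<n}. w j \<otimes> c j) \<in> mod_hom R (free_module R n) (regular_module R)"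
    (is "?g \<in> mod_hom R ?F _")
  unfolding mod_hom_def
proof (intro CollectI conjI ballI funcsetI)
  have terms: "(\<lambda>j. w j \<otimes> c j) \<in> {..<n} \<rightarrow> carrier R" if "w \<in> carrier ?F" for w
    using that c by (auto intro: free_module_coord_closed)
  fix v w
  assume v: "v \<in> carrier ?F" and w: "w \<in> carrier ?F"
  then show "?g w \<in> carrier (regular_module R)"
    using finsum_closed terms by simp
  have "?g (v \<oplus>\<^bsub>?F\<^esub> w) = (\<Oplus>j\<in>{..<n}. v j \<otimes> c j \<oplus> w j \<otimes> c j)"
    using c free_module_coord_closed[OF v] free_module_coord_closed[OF w]
    by (intro finsum_cong') (auto simp: l_distr)
  then show "?g (v \<oplus>\<^bsub>?F\<^esub> w) = ?g v \<oplus>\<^bsub>regular_module R\<^esub> ?g w"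
    using finsum_addf[OF terms[OF v] terms[OF w]] by simp
  fix a
  assume a: "a \<in> carrier R"
  have "?g (a \<odot>\<^bsub>?F\<^esub> v) = (\<Oplus>j\<in>{..<n}. a \<otimes> (v j \<otimes> c j))"
    using a c free_module_coord_closed[OF v] by (intro finsum_cong') (auto simp: m_assoc)
  then show "?g (a \<odot>\<^bsub>?F\<^esub> v) = a \<odot>\<^bsub>regular_module R\<^esub> ?g v"
    using finsum_rdistr[OF _ a terms[OF v]] by simp
qed

lemma lin_comb_free_basis:
  assumes c: "\<And>j. j < n \<Longrightarrow> c j \<in> carrier R" and j: "j < n"
  shows "(\<Oplus>i\<in>{..<n}. free_basis R j i \<otimes> c i) = c j"
proof -
  have "(\<Oplus>i\<in>{..<n}. free_basis R j i \<otimes> c i) = (\<Oplus>i\<in>{..<n}. if j = i then c i else \<zero>)"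
    unfolding free_basis_def using c by (intro finsum_cong') auto
  then show ?thesis
    using finsum_singleton[of j "{..<n}" c] c j by auto
qed

lemma free_module_hom_lift:
  assumes I: "left_ideal R I" and f: "f \<in> mod_hom R (free_module R n) (quotient_module R I)"
  obtains g where "g \<in> mod_hom R (free_module R n) (regular_module R)"
    and "\<And>w. w \<in> carrier (free_module R n) \<Longrightarrow> f w = I +> g w"
proof -
  let ?F = "free_module R n"
  define c where "c j = (SOME a. a \<in> carrier R \<and> f (free_basis R j) = I +> a)" for j
  have ex: "\<exists>a. a \<in> carrier R \<and> f (free_basis R j) = I +> a" if "j < n" for j
    using mod_hom_closed[OF f free_basis_closed[OF that]] by (auto elim!: a_rcosetsE)
  have c: "c j \<in> carrier R \<and> f (free_basis R j) = I +> c j" if "j < n" for j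
    using ex[OF that] unfolding c_def by (rule someI_ex)
  define g where "g w = (\<Oplus>j\<in>{..<n}. w j \<otimes> c j)" for w
  have g_hom: "g \<in> mod_hom R ?F (regular_module R)"
    unfolding g_def using c by (intro mod_hom_lin_comb) blast
  have "(\<lambda>a. I +> a) \<circ> g \<in> mod_hom R ?F (quotient_module R I)"
    using mod_hom_comp[OF g_hom mod_hom_rcos[OF I]] .
  then have "f w = I +> g w" if "w \<in> carrier ?F" for w
    using free_module_hom_ext[OF lmodule_quotient_module[OF I] f _ _ that] c
      lin_comb_free_basis[where c = c] unfolding g_def by simp
  then show ?thesis
    using g_hom that by blast
qed

end

context lmodule
begin

lemma mod_hom_coord_smult:
  assumes x: "x \<in> carrier M"
  shows "(\<lambda>v. v 0 \<odot>\<^bsub>M\<^esub> x) \<in> mod_hom R (free_module R 1) M"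
  unfolding mod_hom_def
  using x free_module_coord_closed[of _ 1 0] by (auto simp: smult_closed smult_l_distr smult_assoc1)

lemma mod_kernel_coord_smult:
  assumes x: "x \<in> carrier M"
  shows "mod_kernel (free_module R 1) M (\<lambda>v. v 0 \<odot>\<^bsub>M\<^esub> x) = (\<lambda>a i. if i = 0 then a else \<zero>) ` ann R M x"
proof
  show "mod_kernel (free_module R 1) M (\<lambda>v. v 0 \<odot>\<^bsub>M\<^esub> x) \<subseteq> (\<lambda>a i. if i = 0 then a else \<zero>) ` ann R M x"
  proof
    fix v
    assume "v \<in> mod_kernel (free_module R 1) M (\<lambda>v. v 0 \<odot>\<^bsub>M\<^esub> x)"
    then have "v \<in> carrier (free_module R 1)" "v 0 \<in> ann R M x"
      unfolding mod_kernel_def ann_def by (auto intro: free_module_coord_closed)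
    then show "v \<in> (\<lambda>a i. if i = 0 then a else \<zero>) ` ann R M x"
      using free_module_1_eq by blast
  qed
  show "(\<lambda>a i. if i = 0 then a else \<zero>) ` ann R M x \<subseteq> mod_kernel (free_module R 1) M (\<lambda>v. v 0 \<odot>\<^bsub>M\<^esub> x)"
    unfolding ann_def mod_kernel_def by auto
qed

lemma finitely_presented_cyclic:
  assumes x: "x \<in> carrier M" and cyclic: "carrier M = (\<lambda>a. a \<odot>\<^bsub>M\<^esub> x) ` carrier R"
    and fg: "fin_gen_left_ideal R (ann R M x)"
  shows "finitely_presented R M"
proof -
  let ?F = "free_module R 1"
  let ?f = "\<lambda>v. v 0 \<odot>\<^bsub>M\<^esub> x"
  let ?\<iota> = "\<lambda>a i. if i = 0 then a else \<zero>"
  have F: "lmodule R ?F"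
    by (rule lmodule_free_module)
  have f_hom: "?f \<in> mod_hom R ?F M"
    using x by (rule mod_hom_coord_smult)
  have "?f ` carrier ?F = carrier M"
  proof
    show "?f ` carrier ?F \<subseteq> carrier M"
      using mod_hom_closed[OF f_hom] by blast
    have "a \<odot>\<^bsub>M\<^esub> x \<in> ?f ` carrier ?F" if "a \<in> carrier R" for a
      using that by (intro image_eqI[where x = "?\<iota> a"]) simp_all
    then show "carrier M \<subseteq> ?f ` carrier ?F"
      unfolding cyclic by (rule image_subsetI)
  qed
  moreover have "submodule R ?F (?\<iota> ` ann R M x)"
    using submodule_mod_kernel[OF F lmodule_axioms f_hom] mod_kernel_coord_smult[OF x] by simp
  then have "fin_gen_submodule R ?F (?\<iota> ` ann R M x)"
    by (rule fin_gen_submodule_image[OF lmodule_regular F mod_hom_free_module_1 fg])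
  then have "fin_gen_submodule R ?F (mod_kernel ?F M ?f)"
    unfolding mod_kernel_coord_smult[OF x] .
  ultimately show ?thesis
    unfolding finitely_presented_def using f_hom by blast
qed

end

context ring
begin

text \<open>Every \<open>a \<in> I\<close> is \<open>g (a v) + a (1 - g v)\<close>, and \<open>a v\<close> lies in \<open>g\<^sup>-\<^sup>1 I\<close>.\<close>

lemma left_ideal_span_lift:
  assumes I: "left_ideal R I" and F: "lmodule R F" and g: "g \<in> mod_hom R F (regular_module R)"
    and v: "v \<in> carrier F" and d: "\<one> \<ominus> g v \<in> I"
    and S: "S \<subseteq> carrier F" "mod_span R F S = {w \<in> carrier F. g w \<in> I}"
  shows "insert (\<one> \<ominus> g v) (g ` S) \<subseteq> I"
    and "left_ideal_span R (insert (\<one> \<ominus> g v) (g ` S)) = I"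
proof -
  interpret A: lmodule R "regular_module R"
    by (rule lmodule_regular)
  let ?d = "\<one> \<ominus> g v"
  let ?T = "insert ?d (g ` S)"
  have gv: "g v \<in> carrier R"
    using mod_hom_closed[OF g v] by simp
  show T_I: "?T \<subseteq> I"
    using d S lmodule.span_superset[OF F S(1)] by blast
  have T_span: "?T \<subseteq> left_ideal_span R ?T"
    using A.span_superset[of ?T] T_I left_ideal_subset[OF I] by auto
  have "I \<subseteq> left_ideal_span R ?T"
  proof
    fix a
    assume a_I: "a \<in> I"
    then have a: "a \<in> carrier R"
      using left_ideal_subset[OF I] by blast
    have split: "a \<otimes> g v \<oplus> a \<otimes> ?d = a"
      using a gv r_distr[of "g v" ?d a, symmetric] by (simp add: a_minus_def a_lcomm[of "g v"] r_neg)
    have ad: "a \<otimes> ?d \<in> I"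
      using left_ideal_m_closed[OF I a d] .
    have "a \<otimes> ?d \<oplus> a \<otimes> g v \<in> I"
      using split a_I a gv by (simp add: a_comm)
    then have "a \<otimes> g v \<in> I"
      using left_ideal_cancel[OF I ad] a gv by simp
    then have "a \<odot>\<^bsub>F\<^esub> v \<in> mod_span R F S"
      using S(2) lmodule.smult_closed[OF F a v] mod_hom_smult[OF g a v] by simp
    then have "g (a \<odot>\<^bsub>F\<^esub> v) \<in> left_ideal_span R (g ` S)"
      using mod_hom_span_image[OF F lmodule_regular g S(1)] by blast
    also have "\<dots> \<subseteq> left_ideal_span R ?T"
      by (rule A.span_mono) blast
    finally have "a \<otimes> g v \<in> left_ideal_span R ?T"
      using mod_hom_smult[OF g a v] by simp
    moreover have "a \<otimes> ?d \<in> left_ideal_span R ?T"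
      using left_ideal_m_closed[OF A.submodule_span a] T_span by blast
    ultimately have "a \<otimes> g v \<oplus> a \<otimes> ?d \<in> left_ideal_span R ?T"
      by (rule left_ideal_a_closed[OF A.submodule_span])
    then show "a \<in> left_ideal_span R ?T"
      using split by simp
  qed
  then show "left_ideal_span R ?T = I"
    using A.span_minimal[OF I T_I] by blast
qed

lemma fin_gen_left_ideal_of_finitely_presented:
  assumes I: "left_ideal R I" and fp: "finitely_presented R (quotient_module R I)"
  shows "fin_gen_left_ideal R I"
proof -
  let ?Q = "quotient_module R I"
  have sub: "additive_subgroup I R"
    using I by (rule left_ideal_additive_subgroup)
  obtain n f where f: "f \<in> mod_hom R (free_module R n) ?Q"
    and surj: "f ` carrier (free_module R n) = carrier ?Q"
    and fg_K: "fin_gen_submodule R (free_module R n) (mod_kernel (free_module R n) ?Q f)"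
    using fp unfolding finitely_presented_def by blast
  let ?F = "free_module R n"
  obtain g where g: "g \<in> mod_hom R ?F (regular_module R)"
    and f_eq: "\<And>w. w \<in> carrier ?F \<Longrightarrow> f w = I +> g w"
    using free_module_hom_lift[OF I f] by blast
  have g_closed: "g w \<in> carrier R" if "w \<in> carrier ?F" for w
    using mod_hom_closed[OF g that] by simp
  have "f w = I \<longleftrightarrow> g w \<in> I" if "w \<in> carrier ?F" for w
    using f_eq[OF that] a_rcos_eq_self_iff[OF sub g_closed[OF that]] by simp
  then have K_eq: "mod_kernel ?F ?Q f = {w \<in> carrier ?F. g w \<in> I}"
    unfolding mod_kernel_def by auto
  obtain S where S: "finite S" "S \<subseteq> mod_kernel ?F ?Q f" "mod_span R ?F S = mod_kernel ?F ?Q f"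
    using fg_K unfolding fin_gen_submodule_def by blast
  have S_carr: "S \<subseteq> carrier ?F"
    using S(2) unfolding mod_kernel_def by blast
  have "I +> \<one> \<in> f ` carrier ?F"
    using surj by simp
  then obtain v where v: "v \<in> carrier ?F" "I +> \<one> = f v"
    by (rule imageE)
  then have d: "\<one> \<ominus> g v \<in> I"
    using a_rcos_eq_iff[OF sub one_closed g_closed] f_eq by simp
  have "mod_span R ?F S = {w \<in> carrier ?F. g w \<in> I}"
    using S(3) K_eq by simp
  note generators = left_ideal_span_lift[OF I lmodule_free_module g v(1) d S_carr this]
  show ?thesis
    unfolding fin_gen_submodule_def
    using generators S(1) by (intro exI[of _ "insert (\<one> \<ominus> g v) (g ` S)"]) simp
qed

end

section \<open>Chain conditions\<close>

lemma finite_image_factor: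
  assumes fin: "finite (f ` S)" and factor: "\<And>x y. x \<in> S \<Longrightarrow> y \<in> S \<Longrightarrow> f x = f y \<Longrightarrow> g x = g y"
  shows "finite (g ` S)"
proof -
  have "g ` S \<subseteq> (\<lambda>z. g (inv_into S f z)) ` f ` S"
  proof
    fix w
    assume "w \<in> g ` S"
    then obtain x where x: "x \<in> S" "w = g x"
      by blast
    moreover have "inv_into S f (f x) \<in> S" "f (inv_into S f (f x)) = f x"
      using x by (auto intro: inv_into_into f_inv_into_f)
    ultimately have "g (inv_into S f (f x)) = w"
      using factor by metis
    then show "w \<in> (\<lambda>z. g (inv_into S f z)) ` f ` S"
      using x by blast
  qed
  then show ?thesis
    using fin finite_subset by blast
qed

lemma decreasing_chain_in_finite_set_stabilizes:
  assumes C: "finite C" and sub: "\<And>n. f n \<subseteq> C" and dec: "\<And>n. f (Suc n) \<subseteq> f n"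
  shows "\<exists>N. \<forall>n\<ge>N. f n = f N"
proof -
  have fin: "finite (f n)" for n
    using C sub finite_subset by blast
  have "range (\<lambda>n. card (f n)) \<subseteq> {..card C}"
    using card_mono[OF C sub] by auto
  then have fin_range: "finite (range (\<lambda>n. card (f n)))"
    by (rule finite_subset) simp
  then have "Min (range (\<lambda>n. card (f n))) \<in> range (\<lambda>n. card (f n))"
    by (rule Min_in) simp
  then obtain N where N: "card (f N) = Min (range (\<lambda>n. card (f n)))"
    by (auto elim!: rangeE)
  have "f n = f N" if "n \<ge> N" for n
  proof -
    have "f n \<subseteq> f N"
      using lift_Suc_antimono_le[of f, OF dec that] .
    moreover have "card (f N) \<le> card (f n)"
      using N Min_le[OF fin_range, of "card (f n)"] by simp
    ultimately show ?thesis
      using card_seteq[OF fin] by blast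
  qed
  then show ?thesis
    by blast
qed

lemma left_artinian_of_finite:
  assumes "finite (carrier S)"
  shows "left_artinian S"
  unfolding left_artinian_def
proof (intro allI impI)
  fix f :: "nat \<Rightarrow> 'a set"
  assume "(\<forall>n. left_ideal S (f n)) \<and> (\<forall>n. f (Suc n) \<subseteq> f n)"
  moreover have "submodule S (regular_module S) I \<Longrightarrow> I \<subseteq> carrier S" for I
    unfolding submodule_def regular_module_def by simp
  ultimately show "\<exists>N. \<forall>n\<ge>N. f n = f N"
    using decreasing_chain_in_finite_set_stabilizes[OF assms, of f] by blast
qed

lemma left_artinian_minimal:
  assumes art: "left_artinian S" and ne: "\<F> \<noteq> {}" and ideals: "\<And>I. I \<in> \<F> \<Longrightarrow> left_ideal S I"
  shows "\<exists>I\<in>\<F>. \<forall>I'\<in>\<F>. I' \<subseteq> I \<longrightarrow> I' = I"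
proof (rule ccontr)
  assume no_min: "\<not> ?thesis"
  define smaller where "smaller I = (SOME I'. I' \<in> \<F> \<and> I' \<subset> I)" for I
  have ex: "\<exists>I'. I' \<in> \<F> \<and> I' \<subset> I" if I: "I \<in> \<F>" for I
    using no_min I by blast
  have smaller: "smaller I \<in> \<F> \<and> smaller I \<subset> I" if "I \<in> \<F>" for I
    unfolding smaller_def using ex[OF that] by (rule someI_ex)
  obtain I0 where I0: "I0 \<in> \<F>"
    using ne by blast
  define chain where "chain n = (smaller ^^ n) I0" for n
  have chain_in: "chain n \<in> \<F>" for n
    by (induction n) (simp_all add: chain_def I0 smaller)
  have chain_Suc: "chain (Suc n) \<subset> chain n" for n
    using smaller[OF chain_in[of n]] by (simp add: chain_def)
  have "(\<forall>n. left_ideal S (chain n)) \<and> (\<forall>n. chain (Suc n) \<subseteq> chain n)"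
    using chain_Suc chain_in ideals by auto
  moreover have "(\<forall>n. left_ideal S (chain n)) \<and> (\<forall>n. chain (Suc n) \<subseteq> chain n) \<longrightarrow>
      (\<exists>N. \<forall>n\<ge>N. chain n = chain N)"
    using art unfolding left_artinian_def by (rule spec)
  ultimately obtain N where stable: "\<forall>n\<ge>N. chain n = chain N"
    by blast
  have "chain (Suc N) = chain N"
    using stable[rule_format, of "Suc N"] by simp
  then show False
    using chain_Suc[of N] by simp
qed

section \<open>Left ideals of finite index\<close>

context ring
begin

lemma fin_gen_left_ideal_carrier: "fin_gen_left_ideal R (carrier R)"
proof -
  interpret A: lmodule R "regular_module R"
    by (rule lmodule_regular)
  have "a \<in> left_ideal_span R {\<one>}" if "a \<in> carrier R" for a
    using left_ideal_m_closed[OF A.submodule_span that, of \<one>] A.span_superset[of "{\<one>}"] that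
    by simp
  then have "left_ideal_span R {\<one>} = carrier R"
    using A.span_minimal[OF left_ideal_carrier, of "{\<one>}"] by auto
  then show ?thesis
    unfolding fin_gen_submodule_def by blast
qed

lemma ex_finite_rcos_representatives:
  assumes J: "additive_subgroup J R" and fin: "finite (carrier (R Quot J))" and L: "L \<subseteq> carrier R"
  shows "\<exists>T. finite T \<and> T \<subseteq> L \<and> (\<forall>y\<in>L. \<exists>t\<in>T. y \<ominus> t \<in> J)"
proof -
  define rep where "rep c = (SOME a. a \<in> c \<inter> L)" for c
  define T where "T = rep ` {c \<in> carrier (R Quot J). c \<inter> L \<noteq> {}}"
  have rep: "rep c \<in> c \<inter> L" if "c \<inter> L \<noteq> {}" for c
    unfolding rep_def some_in_eq using that .
  have "finite T"
    unfolding T_def using fin by simp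
  moreover have "T \<subseteq> L"
    unfolding T_def using rep by blast
  moreover have "\<exists>t\<in>T. y \<ominus> t \<in> J" if y: "y \<in> L" for y
  proof -
    have y_carr: "y \<in> carrier R"
      using y L by blast
    have "y \<in> J +> y"
      using abelian_subgroup.a_rcos_self[OF abelian_subgroup_of_additive[OF J] y_carr] .
    then have t: "rep (J +> y) \<in> (J +> y) \<inter> L" and "rep (J +> y) \<in> T"
      using rep[of "J +> y"] y y_carr unfolding T_def by (auto simp: carrier_FactRing)
    moreover have "J +> y = J +> rep (J +> y)"
      using abelian_subgroup.a_repr_independence'[OF abelian_subgroup_of_additive[OF J]] t y_carr
      by blast
    ultimately show ?thesis
      using a_rcos_eq_iff[OF J y_carr] L by blast
  qed
  ultimately show ?thesis
    by blast
qed

text \<open>\<open>L\<close> is generated by the generators of \<open>J\<close> together with one representative of each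
  \<open>J\<close>-coset inside \<open>L\<close>.\<close>

lemma fin_gen_left_ideal_of_finite_index:
  assumes L: "left_ideal R L" and J: "left_ideal R J" "J \<subseteq> L"
    and fg_J: "fin_gen_left_ideal R J" and fin: "finite (carrier (R Quot J))"
  shows "fin_gen_left_ideal R L"
proof -
  interpret A: lmodule R "regular_module R"
    by (rule lmodule_regular)
  obtain S where S: "finite S" "S \<subseteq> J" "left_ideal_span R S = J"
    using fg_J unfolding fin_gen_submodule_def by blast
  obtain T where T: "finite T" "T \<subseteq> L" "\<forall>y\<in>L. \<exists>t\<in>T. y \<ominus> t \<in> J"
    using ex_finite_rcos_representatives[OF left_ideal_additive_subgroup[OF J(1)] fin left_ideal_subset[OF L]]
    by blast
  have ST_L: "S \<union> T \<subseteq> L"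
    using S(2) J(2) T(2) by blast
  have J_span: "J \<subseteq> left_ideal_span R (S \<union> T)"
    using S(3) A.span_mono[of S "S \<union> T"] by blast
  have T_span: "T \<subseteq> left_ideal_span R (S \<union> T)"
    using A.span_superset[of "S \<union> T"] ST_L left_ideal_subset[OF L] by auto
  have "L \<subseteq> left_ideal_span R (S \<union> T)"
  proof
    fix y
    assume y: "y \<in> L"
    then obtain t where "t \<in> T" "y \<ominus> t \<in> J"
      using T(3) by blast
    then show "y \<in> left_ideal_span R (S \<union> T)"
      using left_ideal_mem_of_diff[OF A.submodule_span] J_span T_span y left_ideal_subset[OF L] by blast
  qed
  moreover have "left_ideal_span R (S \<union> T) \<subseteq> L"
    using A.span_minimal[OF L ST_L] .
  ultimately show ?thesis
    unfolding fin_gen_submodule_def using ST_L S(1) T(1) by (intro exI[of _ "S \<union> T"]) auto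
qed

lemma maximal_left_ideal_comaximal:
  assumes m: "maximal_left_ideal R m" and I: "left_ideal R I" and not_sub: "\<not> I \<subseteq> m"
  obtains u l where "u \<in> I" "l \<in> m" "u \<oplus> l = \<one>"
proof -
  let ?P = "{x \<oplus> y | x y. x \<in> I \<and> y \<in> m}"
  have L: "left_ideal R m"
    using m by (rule left_ideal_maximal)
  have "m \<subseteq> ?P"
  proof
    fix y
    assume "y \<in> m"
    moreover have "y = \<zero> \<oplus> y"
      using \<open>y \<in> m\<close> left_ideal_subset[OF L] by auto
    ultimately show "y \<in> ?P"
      using left_ideal_zero_closed[OF I] by blast
  qed
  moreover obtain x where x: "x \<in> I" "x \<notin> m"
    using not_sub by blast
  moreover have "x = x \<oplus> \<zero>"
    using x(1) left_ideal_subset[OF I] by auto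
  then have "x \<in> ?P"
    using x(1) left_ideal_zero_closed[OF L] by blast
  ultimately have "?P = carrier R"
    using m left_ideal_sum[OF I L] unfolding maximal_left_ideal_def by blast
  then obtain u l where "u \<in> I" "l \<in> m" "\<one> = u \<oplus> l"
    using one_closed by blast
  then show ?thesis
    using that by simp
qed

lemma left_ideal_mult_comaximal:
  assumes X: "left_ideal R X" and Y: "left_ideal R Y"
    and x: "x \<in> X" and y: "y \<in> Y" and xy: "x \<oplus> y = \<one>" and z: "z \<in> X"
  shows "z \<otimes> y \<in> X \<inter> Y"
proof -
  have z_carr: "z \<in> carrier R"
    using z left_ideal_subset[OF X] by blast
  have "z \<otimes> x \<oplus> z \<otimes> y = z"
    using r_distr[of x y z, symmetric] xy x y z_carr left_ideal_subset[OF X] left_ideal_subset[OF Y]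
    by auto
  then have "z \<otimes> x \<oplus> z \<otimes> y \<in> X"
    using z by simp
  then have "z \<otimes> y \<in> X"
    using left_ideal_cancel[OF X left_ideal_m_closed[OF X z_carr x]] z_carr y left_ideal_subset[OF Y]
    by blast
  then show ?thesis
    using left_ideal_m_closed[OF Y z_carr y] by blast
qed

lemma left_ideal_span_right_mult:
  assumes S: "S \<subseteq> carrier R" and c: "c \<in> carrier R" and y: "y \<in> left_ideal_span R S"
  shows "y \<otimes> c \<in> left_ideal_span R ((\<lambda>z. z \<otimes> c) ` S)"
  using mod_hom_span_image[OF lmodule_regular lmodule_regular mod_hom_right_mult[OF c]] S y by auto

text \<open>Every \<open>y \<in> I \<inter> L\<close> is \<open>y u + y l\<close>, so \<open>I \<inter> L\<close> is generated by the products \<open>p l\<close>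
  and \<open>q u\<close> of generators \<open>p\<close> of \<open>I\<close> and \<open>q\<close> of \<open>L\<close>.\<close>

lemma fin_gen_left_ideal_Int_comaximal:
  assumes I: "left_ideal R I" and L: "left_ideal R L"
    and fg_I: "fin_gen_left_ideal R I" and fg_L: "fin_gen_left_ideal R L"
    and u: "u \<in> I" and l: "l \<in> L" and ul: "u \<oplus> l = \<one>"
  shows "fin_gen_left_ideal R (I \<inter> L)"
proof -
  interpret A: lmodule R "regular_module R"
    by (rule lmodule_regular)
  obtain S1 where S1: "finite S1" "S1 \<subseteq> I" "left_ideal_span R S1 = I"
    using fg_I unfolding fin_gen_submodule_def by blast
  obtain S2 where S2: "finite S2" "S2 \<subseteq> L" "left_ideal_span R S2 = L"
    using fg_L unfolding fin_gen_submodule_def by blast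
  have u_carr: "u \<in> carrier R" and l_carr: "l \<in> carrier R"
    using u l left_ideal_subset[OF I] left_ideal_subset[OF L] by auto
  have lu: "l \<oplus> u = \<one>"
    using ul u_carr l_carr by (simp add: a_comm)
  define T where "T = (\<lambda>p. p \<otimes> l) ` S1 \<union> (\<lambda>q. q \<otimes> u) ` S2"
  have T_IL: "T \<subseteq> I \<inter> L"
    using left_ideal_mult_comaximal[OF I L u l ul] left_ideal_mult_comaximal[OF L I l u lu] S1(2) S2(2)
    unfolding T_def by blast
  have "I \<inter> L \<subseteq> left_ideal_span R T"
  proof
    fix y
    assume y: "y \<in> I \<inter> L"
    have "y \<otimes> l \<in> left_ideal_span R ((\<lambda>z. z \<otimes> l) ` S1)"
      using left_ideal_span_right_mult[OF _ l_carr] S1 y left_ideal_subset[OF I] by blast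
    moreover have "y \<otimes> u \<in> left_ideal_span R ((\<lambda>z. z \<otimes> u) ` S2)"
      using left_ideal_span_right_mult[OF _ u_carr] S2 y left_ideal_subset[OF L] by blast
    moreover have "left_ideal_span R ((\<lambda>z. z \<otimes> l) ` S1) \<subseteq> left_ideal_span R T"
      "left_ideal_span R ((\<lambda>z. z \<otimes> u) ` S2) \<subseteq> left_ideal_span R T"
      unfolding T_def by (rule A.span_mono, blast)+
    ultimately have yl: "y \<otimes> l \<in> left_ideal_span R T" and yu: "y \<otimes> u \<in> left_ideal_span R T"
      by blast+
    have "y \<otimes> u \<oplus> y \<otimes> l = y"
      using r_distr[OF u_carr l_carr, of y, symmetric] ul y left_ideal_subset[OF I] by auto
    then show "y \<in> left_ideal_span R T"
      using left_ideal_a_closed[OF A.submodule_span yu yl] by simp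
  qed
  moreover have "left_ideal_span R T \<subseteq> I \<inter> L"
    using A.span_minimal[OF left_ideal_Int[OF I L] T_IL] .
  moreover have "finite T"
    unfolding T_def using S1(1) S2(1) by simp
  ultimately show ?thesis
    unfolding fin_gen_submodule_def using T_IL by blast
qed

lemma finite_FactRing_carrier: "finite (carrier (R Quot carrier R))"
proof -
  have "carrier R +> a = carrier R" if "a \<in> carrier R" for a
    using a_rcos_eq_self_iff[OF left_ideal_additive_subgroup[OF left_ideal_carrier] that] that by blast
  then have "carrier (R Quot carrier R) \<subseteq> {carrier R}"
    by (auto simp: carrier_FactRing)
  then show ?thesis
    by (rule finite_subset) simp
qed

lemma finite_FactRing_Int:
  assumes I: "additive_subgroup I R" and L: "additive_subgroup L R"
    and fin_I: "finite (carrier (R Quot I))" and fin_L: "finite (carrier (R Quot L))"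
  shows "finite (carrier (R Quot (I \<inter> L)))"
proof -
  have IL: "additive_subgroup (I \<inter> L) R"
    using add.subgroups_Inter_pair I L unfolding additive_subgroup_def by blast
  have "(\<lambda>a. (I +> a, L +> a)) ` carrier R \<subseteq> carrier (R Quot I) \<times> carrier (R Quot L)"
    by (auto simp: carrier_FactRing)
  then have "finite ((\<lambda>a. (I +> a, L +> a)) ` carrier R)"
    using fin_I fin_L finite_subset by blast
  moreover have "(I \<inter> L) +> a = (I \<inter> L) +> b"
    if "a \<in> carrier R" "b \<in> carrier R" "(I +> a, L +> a) = (I +> b, L +> b)" for a b
    using that a_rcos_eq_iff[OF I] a_rcos_eq_iff[OF L] a_rcos_eq_iff[OF IL] by simp
  ultimately have "finite ((\<lambda>a. (I \<inter> L) +> a) ` carrier R)"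
    by (rule finite_image_factor)
  then show ?thesis
    by (simp add: carrier_FactRing)
qed

lemma left_ideal_eq_Union_rcos:
  assumes L: "left_ideal R L" and J: "additive_subgroup J R" "J \<subseteq> L"
  shows "L = \<Union>{c \<in> carrier (R Quot J). c \<subseteq> L}"
proof
  show "L \<subseteq> \<Union>{c \<in> carrier (R Quot J). c \<subseteq> L}"
  proof
    fix y
    assume y: "y \<in> L"
    then have "y \<in> carrier R"
      using left_ideal_subset[OF L] by blast
    then have "y \<in> J +> y" "J +> y \<in> carrier (R Quot J)"
      using abelian_subgroup.a_rcos_self[OF abelian_subgroup_of_additive[OF J(1)]]
      by (auto simp: carrier_FactRing)
    moreover have "J +> y \<subseteq> L"
      using left_ideal_rcos_subset[OF L J y] .
    ultimately show "y \<in> \<Union>{c \<in> carrier (R Quot J). c \<subseteq> L}"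
      by blast
  qed
qed blast

lemma finite_maximal_left_ideals:
  assumes fin: "finite (carrier (R Quot jacobson_radical R))"
  shows "finite {m. maximal_left_ideal R m}"
proof -
  let ?J = "jacobson_radical R"
  let ?cosets_in = "\<lambda>m. {c \<in> carrier (R Quot ?J). c \<subseteq> m}"
  have Union_eq: "m = \<Union>(?cosets_in m)" if "maximal_left_ideal R m" for m
    using left_ideal_eq_Union_rcos[OF left_ideal_maximal[OF that]
        left_ideal_additive_subgroup[OF left_ideal_jacobson_radical] jacobson_radical_subset[OF that]] .
  have "inj_on ?cosets_in {m. maximal_left_ideal R m}"
  proof (rule inj_onI)
    fix m1 m2
    assume "m1 \<in> {m. maximal_left_ideal R m}" "m2 \<in> {m. maximal_left_ideal R m}"
      and "?cosets_in m1 = ?cosets_in m2"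
    then show "m1 = m2"
      using Union_eq[of m1] Union_eq[of m2] by simp
  qed
  moreover have "?cosets_in ` {m. maximal_left_ideal R m} \<subseteq> Pow (carrier (R Quot ?J))"
    by blast
  then have "finite (?cosets_in ` {m. maximal_left_ideal R m})"
    using fin by (simp add: finite_subset)
  ultimately show ?thesis
    using finite_imageD by blast
qed

lemma finite_carrier_simple_module:
  assumes S: "simple_module R M" and fin: "finite (carrier (R Quot jacobson_radical R))"
  shows "finite (carrier M)"
proof -
  let ?J = "jacobson_radical R"
  obtain x where x: "x \<in> carrier M" "x \<noteq> \<zero>\<^bsub>M\<^esub>"
    using S by (rule simple_module_nonzero)
  have factor: "a \<odot>\<^bsub>M\<^esub> x = b \<odot>\<^bsub>M\<^esub> x"
    if a: "a \<in> carrier R" and b: "b \<in> carrier R" and ab: "?J +> a = ?J +> b" for a b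
  proof -
    have "a \<ominus> b \<in> ?J"
      using ab a_rcos_eq_iff[OF left_ideal_additive_subgroup[OF left_ideal_jacobson_radical] a b] by simp
    then show ?thesis
      using jacobson_radical_smult_simple[OF S x(1)] lmodule.smult_eq_iff[OF simple_module_lmodule[OF S] a b x(1)]
      by simp
  qed
  have "finite ((\<lambda>a. ?J +> a) ` carrier R)"
    using fin by (simp add: carrier_FactRing)
  then have "finite ((\<lambda>a. a \<odot>\<^bsub>M\<^esub> x) ` carrier R)"
    using factor by (rule finite_image_factor)
  then show ?thesis
    using simple_module_cyclic[OF S x] by simp
qed

lemma left_ideal_FactRing_image:
  assumes J: "ideal J R" and I: "left_ideal R I"
  shows "left_ideal (R Quot J) ((\<lambda>a. J +> a) ` I)"
proof -
  interpret Q: ring "R Quot J"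
    using J by (rule ideal.quotient_is_ring)
  have sub: "abelian_subgroup J R"
    using J by (intro abelian_subgroup_of_additive ideal.axioms(1))
  have I_carr: "I \<subseteq> carrier R"
    using I by (rule left_ideal_subset)
  show ?thesis
    unfolding Q.left_ideal_iff
  proof (intro conjI ballI)
    show "(\<lambda>a. J +> a) ` I \<subseteq> carrier (R Quot J)"
      using I_carr by (auto simp: carrier_FactRing)
    have "J +> \<zero> = J"
      using abelian_subgroup.a_rcos_const[OF sub additive_subgroup.zero_closed[OF ideal.axioms(1)[OF J]]] .
    then show "\<zero>\<^bsub>R Quot J\<^esub> \<in> (\<lambda>a. J +> a) ` I"
      using left_ideal_zero_closed[OF I] unfolding FactRing_def by force
  next
    fix X Y
    assume "X \<in> (\<lambda>a. J +> a) ` I" "Y \<in> (\<lambda>a. J +> a) ` I"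
    then obtain a b where ab: "a \<in> I" "b \<in> I" and "X = J +> a" "Y = J +> b"
      by blast
    then have "X \<oplus>\<^bsub>R Quot J\<^esub> Y = J +> (a \<oplus> b)"
      using abelian_subgroup.a_rcos_sum[OF sub] I_carr unfolding FactRing_def by auto
    then show "X \<oplus>\<^bsub>R Quot J\<^esub> Y \<in> (\<lambda>a. J +> a) ` I"
      using left_ideal_a_closed[OF I ab] by blast
  next
    fix X Y
    assume "X \<in> carrier (R Quot J)" "Y \<in> (\<lambda>a. J +> a) ` I"
    then obtain r a where r: "r \<in> carrier R" and a: "a \<in> I" and "X = J +> r" "Y = J +> a"
      by (auto simp: carrier_FactRing)
    then have "X \<otimes>\<^bsub>R Quot J\<^esub> Y = J +> (r \<otimes> a)"
      using ideal.rcoset_mult_add[OF J] I_carr unfolding FactRing_def by auto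
    then show "X \<otimes>\<^bsub>R Quot J\<^esub> Y \<in> (\<lambda>a. J +> a) ` I"
      using left_ideal_m_closed[OF I r a] by blast
  qed
qed

lemma subset_of_rcos_image_subset:
  assumes L: "left_ideal R L" and J: "additive_subgroup J R" "J \<subseteq> L"
    and K: "K \<subseteq> carrier R" and image: "(\<lambda>a. J +> a) ` K \<subseteq> (\<lambda>a. J +> a) ` L"
  shows "K \<subseteq> L"
proof
  fix a
  assume a: "a \<in> K"
  then obtain b where b: "b \<in> L" "J +> a = J +> b"
    using image by blast
  have "a \<in> J +> a"
    using abelian_subgroup.a_rcos_self[OF abelian_subgroup_of_additive[OF J(1)]] a K by blast
  then show "a \<in> L"
    using left_ideal_rcos_subset[OF L J b(1)] b(2) by blast
qed

end

section \<open>Left arithmetical rings\<close>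

context ring
begin

lemma left_arithmetical_of_fin_gen_radical:
  assumes fin: "finite (carrier (R Quot jacobson_radical R))"
    and fg: "fin_gen_left_ideal R (jacobson_radical R)"
  shows "left_arithmetical R"
  unfolding left_arithmetical_def
proof (intro conjI allI impI)
  fix M :: "('a, 'a set) module"
  assume S: "simple_module R M"
  then show "finite (carrier M)"
    using fin by (rule finite_carrier_simple_module)
  obtain x where x: "x \<in> carrier M" "x \<noteq> \<zero>\<^bsub>M\<^esub>"
    using S by (rule simple_module_nonzero)
  have m: "maximal_left_ideal R (ann R M x)"
    using S x by (rule maximal_left_ideal_ann)
  then have "fin_gen_left_ideal R (ann R M x)"
    by (intro fin_gen_left_ideal_of_finite_index[OF _ left_ideal_jacobson_radical _ fg fin]
        left_ideal_maximal jacobson_radical_subset)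
  then show "finitely_presented R M"
    by (rule lmodule.finitely_presented_cyclic[OF simple_module_lmodule[OF S] x(1)
        simple_module_cyclic[OF S x]])
next
  fix n :: nat
  let ?F = "quotient_module R ` {m. maximal_left_ideal R m}"
  have "\<exists>N\<in>?F. mod_iso R M N" if S: "simple_module R M" for M :: "('a, 'a set) module"
  proof -
    obtain x where x: "x \<in> carrier M" "x \<noteq> \<zero>\<^bsub>M\<^esub>"
      using S by (rule simple_module_nonzero)
    have "quotient_module R (ann R M x) \<in> ?F"
      using maximal_left_ideal_ann[OF S x] by blast
    then show ?thesis
      using lmodule.mod_iso_quotient_ann[OF simple_module_lmodule[OF S] x(1) simple_module_cyclic[OF S x]]
      by blast
  qed
  moreover have "finite ?F"
    using finite_maximal_left_ideals[OF fin] by simp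
  ultimately show "\<exists>F :: ('a, 'a set) module set. finite F \<and>
      (\<forall>M :: ('a, 'a set) module. simple_module R M \<and> finite (carrier M) \<and> card (carrier M) = n
        \<longrightarrow> (\<exists>N\<in>F. mod_iso R M N))"
    by (intro exI[of _ ?F]) blast
qed

lemma left_arithmetical_finite_FactRing:
  assumes "left_arithmetical R" and "maximal_left_ideal R m"
  shows "finite (carrier (R Quot m))"
  using assms simple_quotient_module[of m] carrier_quotient_module[of m]
  unfolding left_arithmetical_def by metis

lemma left_arithmetical_fin_gen_maximal:
  assumes "left_arithmetical R" and m: "maximal_left_ideal R m"
  shows "fin_gen_left_ideal R m"
  using assms simple_quotient_module[OF m]
    fin_gen_left_ideal_of_finitely_presented[OF left_ideal_maximal[OF m]]
  unfolding left_arithmetical_def by blast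

lemma left_arithmetical_Int_maximal:
  assumes ar: "left_arithmetical R" and m: "maximal_left_ideal R m"
    and I: "left_ideal R I" "fin_gen_left_ideal R I" "finite (carrier (R Quot I))"
    and not_sub: "\<not> I \<subseteq> m"
  shows "fin_gen_left_ideal R (I \<inter> m)" and "finite (carrier (R Quot (I \<inter> m)))"
proof -
  have L: "left_ideal R m"
    using m by (rule left_ideal_maximal)
  obtain u l where "u \<in> I" "l \<in> m" "u \<oplus> l = \<one>"
    using maximal_left_ideal_comaximal[OF m I(1) not_sub] .
  then show "fin_gen_left_ideal R (I \<inter> m)"
    using fin_gen_left_ideal_Int_comaximal[OF I(1) L I(2) left_arithmetical_fin_gen_maximal[OF ar m]]
    by blast
  show "finite (carrier (R Quot (I \<inter> m)))"
    using finite_FactRing_Int[OF left_ideal_additive_subgroup[OF I(1)] left_ideal_additive_subgroup[OF L]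
        I(3) left_arithmetical_finite_FactRing[OF ar m]] .
qed

lemma semilocal_minimal_left_ideal:
  assumes sl: "semilocal R" and ne: "\<I> \<noteq> {}"
    and ideals: "\<And>I. I \<in> \<I> \<Longrightarrow> left_ideal R I \<and> jacobson_radical R \<subseteq> I"
  shows "\<exists>I0\<in>\<I>. \<forall>I\<in>\<I>. I \<subseteq> I0 \<longrightarrow> I = I0"
proof -
  let ?J = "jacobson_radical R"
  let ?img = "\<lambda>I. (\<lambda>a. ?J +> a) ` I"
  have sub_J: "additive_subgroup ?J R"
    using left_ideal_jacobson_radical by (rule left_ideal_additive_subgroup)
  have img_ideals: "left_ideal (R Quot ?J) X" if X: "X \<in> ?img ` \<I>" for X
  proof -
    obtain I where I: "I \<in> \<I>" and X_eq: "X = ?img I"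
      using X by blast
    show ?thesis
      unfolding X_eq using ideals[OF I] by (intro left_ideal_FactRing_image[OF ideal_jacobson_radical]) blast
  qed
  have "?img ` \<I> \<noteq> {}"
    using ne by blast
  then have "\<exists>X\<in>?img ` \<I>. \<forall>X'\<in>?img ` \<I>. X' \<subseteq> X \<longrightarrow> X' = X"
    by (rule left_artinian_minimal[OF sl[unfolded semilocal_def] _ img_ideals])
  then obtain I0 where I0: "I0 \<in> \<I>" and I0_min: "\<forall>X'\<in>?img ` \<I>. X' \<subseteq> ?img I0 \<longrightarrow> X' = ?img I0"
    by blast
  have "I = I0" if I: "I \<in> \<I>" and sub: "I \<subseteq> I0" for I
  proof -
    have "?img I \<subseteq> ?img I0"
      using sub by (rule image_mono)
    then have "?img I = ?img I0"
      using I0_min[rule_format, OF imageI[OF I]] by blast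
    then have img_sub: "?img I0 \<subseteq> ?img I"
      by simp
    have L: "left_ideal R I" and J_I: "?J \<subseteq> I"
      using ideals[OF I] by auto
    have "I0 \<subseteq> carrier R"
      using ideals[OF I0] left_ideal_subset by blast
    then have "I0 \<subseteq> I"
      using img_sub by (rule subset_of_rcos_image_subset[OF L sub_J J_I])
    then show ?thesis
      using sub by blast
  qed
  then show ?thesis
    using I0 by blast
qed

text \<open>The minimal finitely generated left ideal of finite index containing \<open>J\<close> lies in every
  maximal left ideal: otherwise intersecting with one would give a smaller such ideal.\<close>

lemma finite_fin_gen_radical_of_left_arithmetical:
  assumes ar: "left_arithmetical R" and sl: "semilocal R"
  shows "finite (carrier (R Quot jacobson_radical R)) \<and> fin_gen_left_ideal R (jacobson_radical R)"
proof -
  let ?J = "jacobson_radical R"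
  define \<I> where "\<I> = {I. left_ideal R I \<and> ?J \<subseteq> I \<and> fin_gen_left_ideal R I \<and> finite (carrier (R Quot I))}"
  have "carrier R \<in> \<I>"
    unfolding \<I>_def
    by (intro CollectI conjI left_ideal_carrier fin_gen_left_ideal_carrier finite_FactRing_carrier
        left_ideal_subset[OF left_ideal_jacobson_radical])
  then have "\<I> \<noteq> {}"
    by blast
  moreover have "left_ideal R I \<and> ?J \<subseteq> I" if "I \<in> \<I>" for I
    using that unfolding \<I>_def by blast
  ultimately have "\<exists>I0\<in>\<I>. \<forall>I\<in>\<I>. I \<subseteq> I0 \<longrightarrow> I = I0"
    by (rule semilocal_minimal_left_ideal[OF sl])
  then obtain I0 where I0: "I0 \<in> \<I>" and I0_min: "\<forall>I\<in>\<I>. I \<subseteq> I0 \<longrightarrow> I = I0"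
    by blast
  have I0_ideal: "left_ideal R I0" and J_I0: "?J \<subseteq> I0"
    and I0_fg: "fin_gen_left_ideal R I0" and I0_fin: "finite (carrier (R Quot I0))"
    using I0 unfolding \<I>_def by auto
  have "I0 \<subseteq> m" if m: "maximal_left_ideal R m" for m
  proof (rule ccontr)
    assume not_sub: "\<not> I0 \<subseteq> m"
    have "left_ideal R (I0 \<inter> m)" "?J \<subseteq> I0 \<inter> m"
      using left_ideal_Int[OF I0_ideal left_ideal_maximal[OF m]] J_I0 jacobson_radical_subset[OF m]
      by auto
    then have "I0 \<inter> m \<in> \<I>"
      using left_arithmetical_Int_maximal[OF ar m I0_ideal I0_fg I0_fin not_sub] unfolding \<I>_def by blast
    then have "I0 \<inter> m = I0"
      using I0_min by blast
    then show False
      using not_sub by blast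
  qed
  then have "I0 = ?J"
    using J_I0 left_ideal_subset[OF I0_ideal] unfolding jacobson_radical_def by blast
  then show ?thesis
    using I0_fg I0_fin by simp
qed

end

theorem proposition2p2:
  fixes A :: "('a, 'm) ring_scheme"
  assumes "ring A"
  shows "(left_arithmetical A \<and> semilocal A) \<longleftrightarrow>
    (finite (carrier (A Quot jacobson_radical A)) \<and>
     fin_gen_submodule A (regular_module A) (jacobson_radical A))"
proof
  assume "left_arithmetical A \<and> semilocal A"
  then show "finite (carrier (A Quot jacobson_radical A)) \<and>
      fin_gen_submodule A (regular_module A) (jacobson_radical A)"
    using ring.finite_fin_gen_radical_of_left_arithmetical[OF assms] by blast
next
  assume fin_fg: "finite (carrier (A Quot jacobson_radical A)) \<and>
      fin_gen_submodule A (regular_module A) (jacobson_radical A)"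
  then have "left_arithmetical A"
    using ring.left_arithmetical_of_fin_gen_radical[OF assms] by blast
  moreover have "semilocal A"
    unfolding semilocal_def using fin_fg by (blast intro: left_artinian_of_finite)
  ultimately show "left_arithmetical A \<and> semilocal A" ..
qed

end
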